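(* Let $p\ge3$ and let $\Gamma_p=\langle \iota,\gamma \mid \iota^2=\gamma^p=1\rangle$ be the Hecke group. For $x\ge1$ let $W_x$ be the set of reciprocal conjugacy classes in $\Gamma_p$ of word length at most $x$. Then there exist a constant $C>0$ and $x_0$ such that for all $x\ge x_0$, \[ 2\left|W_{\lfloor\frac{x}{2}\rfloor}\right|^{2}\leq C^2\left|W_{x}\right|. \]
   Context: The Hecke group $\Gamma_p$ is the Fuchsian group generated by $\iota: z\mapsto -1/z$ and $\alpha_p: z\mapsto z+2\cos(\pi/p)$; with $\gamma=\iota\alpha_p$ it has presentation $\langle \iota,\gamma\mid \iota^2=\gamma^p=1\rangle\cong\mathbb{Z}_2*\mathbb{Z}_p$. A non-trivial element $g$ is reciprocal if $hgh^{-1}=g^{-1}$ for some $h\in\Gamma_p$; a reciprocal class is a conjugacy class containing a reciprocal element. The length of a reduced word $\iota\gamma^{k_1}\cdots\iota\gamma^{k_n}$ ($-p/2\le k_i\le p/2$, $k_i\neq0$) is $\sum_i(1+|k_i|)$; the word length of a conjugacy class is the minimal length of a cyclically reduced word in it. *)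

theory Defs
  imports Complex_Main
begin

text \<open>The Hecke group Gamma_p = Z_2 * Z_p, realised via its normal forms: reduced words
  alternating between the letter Iota (the involution) and Gam k (gamma^k, 1 <= k <= p-1).\<close>

datatype hletter = Iota | Gam nat

fun hpush :: "nat \<Rightarrow> hletter \<Rightarrow> hletter list \<Rightarrow> hletter list" where
  "hpush p Iota (Iota # w) = w"
| "hpush p Iota w = Iota # w"
| "hpush p (Gam k) (Gam j # w) = (if (k + j) mod p = 0 then w else Gam ((k + j) mod p) # w)"
| "hpush p (Gam k) w = (if k mod p = 0 then w else Gam (k mod p) # w)"

definition hred :: "nat \<Rightarrow> hletter list \<Rightarrow> hletter list" where
  "hred p w = foldr (hpush p) w []"

definition hreduced :: "nat \<Rightarrow> hletter list \<Rightarrow> bool" where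
  "hreduced p w \<longleftrightarrow> hred p w = w"

definition hmult :: "nat \<Rightarrow> hletter list \<Rightarrow> hletter list \<Rightarrow> hletter list" where
  "hmult p u v = foldr (hpush p) u v"

fun linv :: "nat \<Rightarrow> hletter \<Rightarrow> hletter" where
  "linv p Iota = Iota"
| "linv p (Gam k) = Gam ((p - k mod p) mod p)"

definition hinv :: "nat \<Rightarrow> hletter list \<Rightarrow> hletter list" where
  "hinv p w = hred p (rev (map (linv p) w))"

definition hconj :: "nat \<Rightarrow> hletter list \<Rightarrow> hletter list \<Rightarrow> bool" where
  "hconj p g g' \<longleftrightarrow> (\<exists>h. hreduced p h \<and> hmult p (hmult p h g) (hinv p h) = g')"

definition hreciprocal :: "nat \<Rightarrow> hletter list \<Rightarrow> bool" where
  "hreciprocal p g \<longleftrightarrow> hreduced p g \<and> g \<noteq> [] \<and> hconj p g (hinv p g)"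

definition hconjclass :: "nat \<Rightarrow> hletter list \<Rightarrow> hletter list set" where
  "hconjclass p g = {g'. hreduced p g' \<and> hconj p g g'}"

definition recip_classes :: "nat \<Rightarrow> hletter list set set" where
  "recip_classes p = {K. \<exists>g. hreduced p g \<and> K = hconjclass p g \<and> (\<exists>g'\<in>K. hreciprocal p g')}"

fun same_factor :: "hletter \<Rightarrow> hletter \<Rightarrow> bool" where
  "same_factor Iota Iota = True"
| "same_factor (Gam _) (Gam _) = True"
| "same_factor _ _ = False"

definition cyc_reduced :: "nat \<Rightarrow> hletter list \<Rightarrow> bool" where
  "cyc_reduced p w \<longleftrightarrow> hreduced p w \<and> (length w \<ge> 2 \<longrightarrow> \<not> same_factor (hd w) (last w))"

text \<open>Length: iota counts 1, gamma^k counts |k| with k taken in [-p/2, p/2].\<close>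
fun llen :: "nat \<Rightarrow> hletter \<Rightarrow> nat" where
  "llen p Iota = 1"
| "llen p (Gam k) = min (k mod p) (p - k mod p)"

definition wlen :: "nat \<Rightarrow> hletter list \<Rightarrow> nat" where
  "wlen p w = sum_list (map (llen p) w)"

definition class_len :: "nat \<Rightarrow> hletter list set \<Rightarrow> nat" where
  "class_len p K = Min (wlen p ` {w \<in> K. cyc_reduced p w})"

definition W :: "nat \<Rightarrow> real \<Rightarrow> hletter list set set" where
  "W p x = {K \<in> recip_classes p. real (class_len p K) \<le> x}"

end

theory Submission
  imports Defs
begin

text \<open>Both sides are compared with the number N(m) of reduced words of length at most m.
  A reciprocal class contains a cyclically reduced word c of minimal length which, after a
  rotation, satisfies c_i = (c_(-i))^-1 with indices mod |c|; such a word is determined by its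
  first half, so |W_y| is at most N(y/2 + p). Conversely, for a reduced word u beginning and
  ending with a power of gamma, the class of iota u iota u^-1 is reciprocal of length 2|u| + 2,
  and at most two such u give the same class, so N(m) is at most 8 |W_x| once 2m + 6 \<le> x.
  Finally N is supermultiplicative up to constants, N(t)^2 \<le> 8 N(2t + 7), and
  N(m + D) \<le> N(m) N(D + p), which turns the two bounds into |W_(x/2)|^2 \<le> C |W_x|.\<close>

section \<open>Normal forms\<close>

definition valid_letter :: "nat \<Rightarrow> hletter \<Rightarrow> bool" where
  "valid_letter p x \<longleftrightarrow> (case x of Iota \<Rightarrow> True | Gam k \<Rightarrow> 0 < k \<and> k < p)"

definition valid_word :: "nat \<Rightarrow> hletter list \<Rightarrow> bool" where
  "valid_word p w \<longleftrightarrow> (\<forall>x\<in>set w. valid_letter p x)"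

definition normal :: "nat \<Rightarrow> hletter list \<Rightarrow> bool" where
  "normal p w \<longleftrightarrow> valid_word p w \<and> successively (\<lambda>x y. \<not> same_factor x y) w"

lemma valid_letter_simps[simp]:
  "valid_letter p Iota" "valid_letter p (Gam k) \<longleftrightarrow> 0 < k \<and> k < p"
  by (auto simp: valid_letter_def)

lemma valid_word_append[simp]: "valid_word p (u @ v) \<longleftrightarrow> valid_word p u \<and> valid_word p v"
  by (auto simp: valid_word_def)

lemma normal_valid_word: "normal p w \<Longrightarrow> valid_word p w"
  by (simp add: normal_def)

lemma normal_Nil[simp]: "normal p []"
  by (simp add: normal_def valid_word_def)

lemma normal_Cons:
  "normal p (x # w) \<longleftrightarrow> valid_letter p x \<and> normal p w \<and> (w = [] \<or> \<not> same_factor x (hd w))"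
  by (auto simp: normal_def valid_word_def successively_Cons)

lemma normal_append:
  "normal p (u @ v) \<longleftrightarrow> normal p u \<and> normal p v \<and> (u = [] \<or> v = [] \<or> \<not> same_factor (last u) (hd v))"
  by (auto simp: normal_def successively_append_iff)

lemma normal_take: "normal p w \<Longrightarrow> normal p (take k w)"
  by (metis append_take_drop_id normal_append)

lemma normal_drop: "normal p w \<Longrightarrow> normal p (drop k w)"
  by (metis append_take_drop_id normal_append)

lemma same_factor_refl: "same_factor x x"
  by (cases x) auto

lemma same_factor_sym: "same_factor x y = same_factor y x"
  by (cases x; cases y) auto

lemma same_factor_alt: "\<not> same_factor x y \<Longrightarrow> same_factor x z = (\<not> same_factor y z)"
  by (cases x; cases y; cases z) auto

lemma same_factor_Gam_left[simp]: "same_factor (Gam a) x \<longleftrightarrow> x \<noteq> Iota"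
  by (cases x) auto

lemma same_factor_Gam_right[simp]: "same_factor x (Gam a) \<longleftrightarrow> x \<noteq> Iota"
  by (cases x) auto

lemma same_factor_Iota_left[simp]: "same_factor Iota x \<longleftrightarrow> x = Iota"
  by (cases x) auto

lemma same_factor_Iota_right[simp]: "same_factor x Iota \<longleftrightarrow> x = Iota"
  by (cases x) auto

lemma normal_hpush: "normal p w \<Longrightarrow> 0 < p \<Longrightarrow> normal p (hpush p x w)"
  by (induction p x w rule: hpush.induct) (auto simp: normal_Cons split: list.splits)

lemma normal_hred: "0 < p \<Longrightarrow> normal p (hred p w)"
  by (induction w) (auto simp: hred_def normal_hpush)

lemma hpush_normal_Cons: "hpush p x w = x # w" if "normal p (x # w)"
proof (cases w)
  case (Cons y w') then show ?thesis using that by (cases x; cases y) (auto simp: normal_Cons)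
qed (use that in \<open>cases x, auto simp: normal_Cons\<close>)

lemma hred_normal: "normal p w \<Longrightarrow> hred p w = w"
proof (induction w)
  case (Cons x w)
  then have "normal p w" by (simp add: normal_Cons)
  with Cons show ?case by (simp add: hred_def hpush_normal_Cons)
qed (simp add: hred_def)

lemma hreduced_iff_normal: "0 < p \<Longrightarrow> hreduced p w \<longleftrightarrow> normal p w"
  using normal_hred hred_normal unfolding hreduced_def by metis

lemma hpush_mod: "hpush p (Gam k) w = hpush p (Gam (k mod p)) w"
proof (cases w)
  case (Cons y w') then show ?thesis by (cases y) (auto simp: mod_add_left_eq)
qed simp

lemma hpush_Iota_not_Iota: "w = [] \<or> hd w \<noteq> Iota \<Longrightarrow> hpush p Iota w = Iota # w"
  by (cases w rule: list.exhaust; cases "hd w") auto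

lemma hpush_Gam_not_Gam:
  "w = [] \<or> hd w = Iota \<Longrightarrow> hpush p (Gam k) w = (if k mod p = 0 then w else Gam (k mod p) # w)"
  by (cases w rule: list.exhaust; cases "hd w") auto

lemma mod_add_dvd_right: "(p::nat) dvd c \<Longrightarrow> (a + c) mod p = a mod p"
  by (metis dvd_imp_mod_0 add_0_right mod_add_right_eq)

lemma hpush_Gam_mod_zero: "normal p w \<Longrightarrow> k mod p = 0 \<Longrightarrow> hpush p (Gam k) w = w"
proof (cases w)
  case (Cons y w') assume "normal p w" "k mod p = 0" then show ?thesis using Cons
    by (cases y) (auto simp: normal_Cons)
qed simp

lemma hpush_Iota_Iota: "normal p w \<Longrightarrow> hpush p Iota (hpush p Iota w) = w"
proof (cases w)
  case (Cons y w') assume "normal p w" then show ?thesis using Cons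
  proof (cases y)
    case Iota then show ?thesis using Cons \<open>normal p w\<close>
      by (cases w') (auto simp: normal_Cons hpush_Iota_not_Iota)
  qed (use Cons in auto)
qed simp

lemma hpush_Gam_Gam:
  "normal p w \<Longrightarrow> 0 < p \<Longrightarrow> hpush p (Gam a) (hpush p (Gam b) w) = hpush p (Gam (a + b)) w"
proof (cases w)
  case Nil assume "0 < p" then show ?thesis using Nil by (auto simp: mod_add_right_eq)
next
  case (Cons y w') assume "normal p w" "0 < p" then show ?thesis using Cons
    by (cases y) (auto simp: normal_Cons mod_add_right_eq add.assoc hpush_Gam_not_Gam mod_add_dvd_right)
qed

lemma hpush_linv_left: "normal p w \<Longrightarrow> 0 < p \<Longrightarrow> hpush p (linv p x) (hpush p x w) = w"
proof (cases x)
  case (Gam k) assume a: "normal p w" "0 < p"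
  have "((p - k mod p) mod p + k) mod p = 0"
    by (metis a(2) add.commute le_add_diff_inverse mod_add_right_eq mod_le_divisor mod_self mod_add_left_eq)
  then show ?thesis using a Gam by (simp add: hpush_Gam_Gam hpush_Gam_mod_zero)
qed (simp add: hpush_Iota_Iota)

lemma hpush_linv_right: "normal p w \<Longrightarrow> 0 < p \<Longrightarrow> hpush p x (hpush p (linv p x) w) = w"
proof (cases x)
  case (Gam k) assume a: "normal p w" "0 < p"
  have "(k + (p - k mod p) mod p) mod p = 0"
    by (metis a(2) add.commute le_add_diff_inverse mod_add_right_eq mod_le_divisor mod_self mod_add_left_eq)
  then show ?thesis using a Gam by (simp add: hpush_Gam_Gam hpush_Gam_mod_zero)
qed (simp add: hpush_Iota_Iota)

lemma normal_foldr_hpush: "normal p w \<Longrightarrow> 0 < p \<Longrightarrow> normal p (foldr (hpush p) u w)"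
  by (induction u) (auto simp: normal_hpush)

lemma foldr_hpush_step:
  assumes "normal p r" "normal p w" "0 < p"
  shows "foldr (hpush p) (hpush p x r) w = hpush p x (foldr (hpush p) r w)"
proof (cases x)
  case Iota
  show ?thesis
  proof (cases r)
    case (Cons y r')
    show ?thesis
    proof (cases y)
      case Iota
      have "normal p (foldr (hpush p) r' w)" using assms Cons by (simp add: normal_foldr_hpush normal_Cons)
      then show ?thesis using \<open>x = Iota\<close> Cons Iota by (simp add: hpush_Iota_Iota)
    next
      case (Gam j) then show ?thesis using \<open>x = Iota\<close> Cons by simp
    qed
  qed (simp add: Iota)
next
  case (Gam k)
  show ?thesis
  proof (cases "r = [] \<or> hd r = Iota")
    case True
    have "normal p (foldr (hpush p) r w)" using assms by (simp add: normal_foldr_hpush)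
    then show ?thesis using True Gam
      by (auto simp: hpush_Gam_not_Gam hpush_Gam_mod_zero hpush_mod[of p k])
  next
    case False
    then obtain j r' where r: "r = Gam j # r'" by (cases r; cases "hd r") auto
    have nr: "normal p (foldr (hpush p) r' w)" using assms r by (simp add: normal_foldr_hpush normal_Cons)
    have "hpush p x (foldr (hpush p) r w) = hpush p (Gam (k + j)) (foldr (hpush p) r' w)"
      using r Gam nr assms by (simp add: hpush_Gam_Gam)
    also have "\<dots> = hpush p (Gam ((k + j) mod p)) (foldr (hpush p) r' w)"
      by (rule hpush_mod)
    finally show ?thesis using r Gam nr by (auto simp: hpush_Gam_mod_zero)
  qed
qed

lemma foldr_hpush_hred:
  "normal p w \<Longrightarrow> 0 < p \<Longrightarrow> foldr (hpush p) (hred p u) w = foldr (hpush p) u w"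
proof (induction u)
  case (Cons x u)
  have "foldr (hpush p) (hred p (x # u)) w = foldr (hpush p) (hpush p x (hred p u)) w"
    by (simp add: hred_def)
  also have "\<dots> = hpush p x (foldr (hpush p) (hred p u) w)"
    using Cons by (simp add: foldr_hpush_step normal_hred)
  finally show ?case using Cons by simp
qed (simp add: hred_def)

lemma hred_append: "hred p (u @ v) = foldr (hpush p) u (hred p v)"
  by (simp add: hred_def)

lemma hred_hred_append: "0 < p \<Longrightarrow> hred p (hred p u @ v) = hred p (u @ v)"
  by (simp add: hred_append foldr_hpush_hred normal_hred)

lemma hred_append_hred: "0 < p \<Longrightarrow> hred p (u @ hred p v) = hred p (u @ v)"
  by (simp add: hred_append hred_normal normal_hred)

lemma hred_idem: "0 < p \<Longrightarrow> hred p (hred p u) = hred p u"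
  by (simp add: hred_normal normal_hred)

lemma hred_hred_middle: "0 < p \<Longrightarrow> hred p (a @ hred p b @ c) = hred p (a @ b @ c)"
  by (metis hred_hred_append hred_append_hred)

lemma hred_Cons: "hred p (x # u) = hpush p x (hred p u)"
  by (simp add: hred_def)

lemma hmult_eq_hred: "normal p v \<Longrightarrow> hmult p u v = hred p (u @ v)"
  by (simp add: hmult_def hred_append hred_normal)

abbreviation winv :: "nat \<Rightarrow> hletter list \<Rightarrow> hletter list" where
  "winv p u \<equiv> rev (map (linv p) u)"

lemma hred_winv_append: "0 < p \<Longrightarrow> hred p (winv p u @ u) = []"
proof (induction u)
  case (Cons x u)
  have "hred p (winv p (x # u) @ x # u) = foldr (hpush p) (winv p u) (hpush p (linv p x) (hpush p x (hred p u)))"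
    by (simp add: hred_append hred_Cons)
  also have "\<dots> = foldr (hpush p) (winv p u) (hred p u)"
    using Cons by (simp add: hpush_linv_left normal_hred)
  finally show ?case using Cons by (simp add: hred_append)
qed (simp add: hred_def)

lemma hred_append_winv: "0 < p \<Longrightarrow> hred p (u @ winv p u) = []"
proof (induction u)
  case (Cons x u)
  have "hred p ((x # u) @ winv p (x # u)) = hpush p x (hred p ((u @ winv p u) @ [linv p x]))"
    by (simp add: hred_Cons)
  also have "hred p ((u @ winv p u) @ [linv p x]) = hred p (hred p (u @ winv p u) @ [linv p x])"
    using Cons(2) by (metis hred_hred_append)
  also have "\<dots> = hpush p (linv p x) []" using Cons by (simp add: hred_def del: append_assoc)
  finally show ?case using Cons by (simp add: hpush_linv_right)
qed (simp add: hred_def)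

lemma hred_winv_hred: "0 < p \<Longrightarrow> hred p (winv p (hred p h)) = hred p (winv p h)"
proof -
  assume p: "0 < p"
  let ?A = "hred p h"
  have "hred p (winv p ?A) = hred p (winv p ?A @ hred p (h @ winv p h))"
    using p by (simp add: hred_append_winv)
  also have "\<dots> = hred p (hred p (winv p ?A @ h) @ winv p h)"
    using p by (simp add: hred_hred_append hred_append_hred)
  also have "hred p (winv p ?A @ h) = hred p (winv p ?A @ ?A)" using p by (simp add: hred_append_hred)
  also have "\<dots> = []" using p by (simp add: hred_winv_append)
  finally show ?thesis by (simp add: hred_def)
qed

lemma hred_Nil[simp]: "hred p [] = []"
  by (simp add: hred_def)

lemma hred_cancel_linv_left: "0 < p \<Longrightarrow> hred p (a @ linv p x # x # b) = hred p (a @ b)"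
  by (simp add: hred_append hred_Cons hpush_linv_left normal_hred)

lemma hred_cancel_linv_right: "0 < p \<Longrightarrow> hred p (a @ x # linv p x # b) = hred p (a @ b)"
  by (simp add: hred_append hred_Cons hpush_linv_right normal_hred)

lemma valid_letter_linv: "valid_letter p x \<Longrightarrow> valid_letter p (linv p x)"
  by (cases x) auto

lemma linv_linv: "valid_letter p x \<Longrightarrow> linv p (linv p x) = x"
  by (cases x) auto

lemma linv_Iota_iff: "linv p x = Iota \<longleftrightarrow> x = Iota"
  by (cases x) auto

lemma same_factor_linv: "same_factor (linv p x) (linv p y) = same_factor x y"
  by (cases x; cases y) auto

lemma same_factor_linv_self: "same_factor (linv p x) x"
  by (cases x) auto

lemma valid_word_winv: "valid_word p h \<Longrightarrow> valid_word p (winv p h)"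
  by (auto simp: valid_word_def valid_letter_linv)

lemma winv_winv: "valid_word p h \<Longrightarrow> winv p (winv p h) = h"
  by (induction h) (auto simp: valid_word_def linv_linv)

lemma normal_winv: "normal p w \<Longrightarrow> normal p (winv p w)"
  unfolding normal_def valid_word_def
  by (auto simp: valid_letter_linv successively_map same_factor_linv same_factor_sym)

lemma hinv_normal: "normal p w \<Longrightarrow> hinv p w = winv p w"
  by (simp add: hinv_def hred_normal normal_winv)

section \<open>Conjugacy and cyclic reduction\<close>

definition conjugate :: "nat \<Rightarrow> hletter list \<Rightarrow> hletter list \<Rightarrow> bool" where
  "conjugate p g w \<longleftrightarrow> (\<exists>h. valid_word p h \<and> w = hred p (h @ g @ winv p h))"

lemma hconj_iff_conjugate:
  assumes "normal p g" "0 < p"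
  shows "hconj p g w \<longleftrightarrow> conjugate p g w"
proof
  assume "hconj p g w"
  then obtain h where h: "hreduced p h" "hmult p (hmult p h g) (hinv p h) = w"
    by (auto simp: hconj_def)
  have "normal p h" using h(1) assms by (simp add: hreduced_iff_normal)
  have "w = hred p (hred p (h @ g) @ hred p (winv p h))"
    using h(2) assms by (simp add: hmult_eq_hred hinv_def normal_hred)
  also have "\<dots> = hred p (h @ g @ winv p h)" using assms by (simp add: hred_hred_append hred_append_hred)
  finally show "conjugate p g w"
    using \<open>normal p h\<close> normal_valid_word unfolding conjugate_def by blast
next
  assume "conjugate p g w"
  then obtain h where h: "valid_word p h" "w = hred p (h @ g @ winv p h)" by (auto simp: conjugate_def)
  let ?h = "hred p h"
  have "hmult p (hmult p ?h g) (hinv p ?h) = hred p (hred p (?h @ g) @ hred p (winv p ?h))"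
    using assms by (simp add: hmult_eq_hred hinv_def normal_hred)
  also have "\<dots> = hred p ((h @ g) @ hred p (winv p ?h))" using assms by (simp add: hred_hred_append)
  also have "\<dots> = hred p ((h @ g) @ hred p (winv p h))" using assms by (simp add: hred_winv_hred)
  also have "\<dots> = w" using assms h hred_append_hred[of p "h @ g" "winv p h"] by simp
  moreover have "hreduced p ?h" using assms by (simp add: hreduced_def hred_idem)
  ultimately show "hconj p g w" unfolding hconj_def by blast
qed

lemma conjugate_normal: "conjugate p g w \<Longrightarrow> 0 < p \<Longrightarrow> normal p w"
  by (auto simp: conjugate_def normal_hred)

lemma conjugate_refl: "normal p g \<Longrightarrow> conjugate p g g"
  unfolding conjugate_def by (rule exI[of _ "[]"]) (simp add: valid_word_def hred_normal)

lemma conjugate_trans: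
  assumes "conjugate p a b" "conjugate p b c" "0 < p"
  shows "conjugate p a c"
proof -
  obtain h1 where h1: "valid_word p h1" "b = hred p (h1 @ a @ winv p h1)"
    using assms by (auto simp: conjugate_def)
  obtain h2 where h2: "valid_word p h2" "c = hred p (h2 @ b @ winv p h2)"
    using assms by (auto simp: conjugate_def)
  have "c = hred p ((h2 @ h1) @ a @ winv p (h2 @ h1))"
    using h1 h2 assms by (simp add: hred_hred_middle)
  then show ?thesis using h1 h2 unfolding conjugate_def by (metis valid_word_append)
qed

lemma conjugate_sym:
  assumes "conjugate p a b" "normal p a" "0 < p"
  shows "conjugate p b a"
proof -
  obtain h where h: "valid_word p h" "b = hred p (h @ a @ winv p h)" using assms by (auto simp: conjugate_def)
  have "hred p (winv p h @ b @ winv p (winv p h)) = hred p (winv p h @ h @ a @ winv p h @ h)"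
    using h assms by (simp add: hred_hred_middle winv_winv)
  also have "\<dots> = hred p (hred p (winv p h @ h) @ a @ hred p (winv p h @ h))"
    using assms hred_hred_append[of p "winv p h @ h" "a @ hred p (winv p h @ h)"]
      hred_append_hred[of p "winv p h @ h @ a" "winv p h @ h"] by simp
  also have "\<dots> = a" using assms by (simp add: hred_winv_append hred_normal)
  finally show ?thesis using h unfolding conjugate_def by (metis valid_word_winv)
qed

lemma hconjclass_conv_conjugate:
  "normal p g \<Longrightarrow> 0 < p \<Longrightarrow> hconjclass p g = {w. conjugate p g w}"
  by (auto simp: hconjclass_def hconj_iff_conjugate hreduced_iff_normal conjugate_normal)

lemma conjugate_by_letter: "valid_letter p x \<Longrightarrow> conjugate p g (hred p (x # g @ [linv p x]))"
  unfolding conjugate_def by (rule exI[of _ "[x]"]) (simp add: valid_word_def)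

text \<open>Cyclic reduction cancels a first and last iota, or gamma^a ... gamma^b with a + b = 0 mod p;
  otherwise gamma^a ... gamma^b is conjugated by gamma^-a into ... gamma^(a+b).\<close>

function cyc_red :: "nat \<Rightarrow> hletter list \<Rightarrow> hletter list" where
  "cyc_red p w = (if 2 \<le> length w \<and> same_factor (hd w) (last w) then
     (case (hd w, last w) of
        (Iota, _) \<Rightarrow> cyc_red p (butlast (tl w))
      | (Gam a, Gam b) \<Rightarrow> (if (a + b) mod p = 0 then cyc_red p (butlast (tl w))
                          else butlast (tl w) @ [Gam ((a + b) mod p)])
      | _ \<Rightarrow> w)
     else w)"
  by pat_completeness auto
termination by (relation "measure (\<lambda>(p, w). length w)") auto

declare cyc_red.simps[simp del]

lemma cyc_red_Iota_Iota[simp]: "cyc_red p (Iota # m @ [Iota]) = cyc_red p m"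
  by (subst cyc_red.simps) simp

lemma cyc_red_Gam_Gam[simp]:
  "cyc_red p (Gam a # m @ [Gam b]) = (if (a + b) mod p = 0 then cyc_red p m else m @ [Gam ((a + b) mod p)])"
  by (subst cyc_red.simps) simp

lemma cyc_red_id: "\<not> (2 \<le> length w \<and> same_factor (hd w) (last w)) \<Longrightarrow> cyc_red p w = w"
  by (subst cyc_red.simps) (simp only: if_False)

definition ends_alternate :: "hletter list \<Rightarrow> bool" where
  "ends_alternate w \<longleftrightarrow> (2 \<le> length w \<longrightarrow> \<not> same_factor (hd w) (last w))"

lemma cyc_reduced_iff_normal:
  "0 < p \<Longrightarrow> cyc_reduced p w \<longleftrightarrow> normal p w \<and> ends_alternate w"
  by (simp add: cyc_reduced_def hreduced_iff_normal ends_alternate_def)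

lemma cyc_red_ends_alternate: "ends_alternate w \<Longrightarrow> cyc_red p w = w"
  by (simp add: ends_alternate_def cyc_red_id)

lemma split_ends:
  assumes "2 \<le> length w"
  obtains x m y where "w = x # m @ [y]"
proof -
  have "w = hd w # butlast (tl w) @ [last w]"
    using assms by (cases w) (auto simp: butlast_append last_tl)
  then show ?thesis using that by blast
qed

lemma normal_ends:
  "normal p (x # m @ [y]) \<Longrightarrow> normal p m \<and> (m \<noteq> [] \<longrightarrow> \<not> same_factor x (hd m) \<and> \<not> same_factor (last m) y)
   \<and> valid_letter p x \<and> valid_letter p y \<and> (m = [] \<longrightarrow> \<not> same_factor x y)"
  by (auto simp: normal_Cons normal_append)

lemma normal_cyc_red:
  "normal p w \<Longrightarrow> 0 < p \<Longrightarrow> normal p (cyc_red p w) \<and> ends_alternate (cyc_red p w)"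
proof (induction p w rule: cyc_red.induct)
  case (1 p w)
  show ?case
  proof (cases "2 \<le> length w \<and> same_factor (hd w) (last w)")
    case False then show ?thesis using 1 by (simp add: cyc_red_id ends_alternate_def)
  next
    case True
    then obtain x m y where w: "w = x # m @ [y]" by (meson split_ends)
    have nm: "normal p m" using normal_ends "1.prems" w by blast
    show ?thesis
    proof (cases x)
      case Iota
      then have "y = Iota" using True w by simp
      then show ?thesis using 1 w Iota nm True by simp
    next
      case (Gam a)
      then obtain b where y: "y = Gam b" using True w by (cases y) auto
      show ?thesis
      proof (cases "(a + b) mod p = 0")
        case True
        then show ?thesis using 1 w Gam y nm \<open>2 \<le> length w \<and> _\<close> by simp
      next
        case False
        have "m \<noteq> [] \<longrightarrow> hd m = Iota \<and> last m = Iota"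
          using normal_ends[of p x m y] "1.prems" w Gam y by auto
        then show ?thesis using False w Gam y nm 1
          by (cases "m = []") (auto simp: normal_append ends_alternate_def normal_Cons)
      qed
    qed
  qed
qed

lemma hred_snoc_Gam_Gam:
  "0 < p \<Longrightarrow> normal p (m @ [Gam b]) \<Longrightarrow> valid_letter p (Gam a) \<Longrightarrow>
   hred p (m @ [Gam b, Gam a]) = (if (a + b) mod p = 0 then m else m @ [Gam ((a + b) mod p)])"
proof -
  assume a: "0 < p" "normal p (m @ [Gam b])" "valid_letter p (Gam a)"
  have nm: "normal p m" using a(2) by (simp add: normal_append)
  have "hred p (m @ [Gam b, Gam a]) = foldr (hpush p) m (hred p [Gam b, Gam a])"
    by (simp only: hred_append)
  also have "hred p [Gam b, Gam a] = hpush p (Gam b) [Gam a]"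
    using a by (simp add: hred_def)
  also have "hpush p (Gam b) [Gam a] = (if (a + b) mod p = 0 then [] else [Gam ((a + b) mod p)])"
    by (simp add: add.commute)
  also have "foldr (hpush p) m \<dots> = hred p (m @ (if (a + b) mod p = 0 then [] else [Gam ((a + b) mod p)]))"
    using a by (simp add: hred_append hred_normal normal_Cons)
  also have "\<dots> = (if (a + b) mod p = 0 then m else m @ [Gam ((a + b) mod p)])"
    using a nm by (auto intro!: hred_normal simp: normal_append normal_Cons)
  finally show ?thesis .
qed

lemma conjugate_cyc_red: "normal p w \<Longrightarrow> 0 < p \<Longrightarrow> conjugate p w (cyc_red p w)"
proof (induction p w rule: cyc_red.induct)
  case (1 p w)
  show ?case
  proof (cases "2 \<le> length w \<and> same_factor (hd w) (last w)")
    case False then show ?thesis using 1 by (simp add: cyc_red_id conjugate_refl)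
  next
    case True
    then obtain x m y where w: "w = x # m @ [y]" by (meson split_ends)
    have nm: "normal p m" using normal_ends "1.prems" w by blast
    show ?thesis
    proof (cases x)
      case Iota
      then have y: "y = Iota" using True w by simp
      have "hred p (Iota # w @ [Iota]) = m"
        using w Iota y hred_cancel_linv_left[of p "[]" Iota "m @ [Iota, Iota]"]
          hred_cancel_linv_left[of p m Iota "[]"] "1.prems" nm by (simp add: hred_normal)
      then have "conjugate p w m" using conjugate_by_letter[of p Iota w] by simp
      moreover have "conjugate p m (cyc_red p m)" using 1 w Iota True nm by simp
      ultimately show ?thesis using w Iota y conjugate_trans "1.prems" by auto
    next
      case (Gam a)
      then obtain b where y: "y = Gam b" using True w by (cases y) auto
      have va: "valid_letter p (Gam a)" using "1.prems" w Gam by (simp add: normal_Cons)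
      have "hred p (linv p (Gam a) # w @ [Gam a]) = hred p (m @ [Gam b, Gam a])"
        using w Gam y hred_cancel_linv_left[of p "[]" "Gam a" "m @ [Gam b, Gam a]"] "1.prems"
        by (simp del: linv.simps)
      then have cjw: "conjugate p w (hred p (m @ [Gam b, Gam a]))"
        using conjugate_by_letter[OF valid_letter_linv[OF va], of w] linv_linv[OF va] by simp
      have nmb: "normal p (m @ [Gam b])" using "1.prems" w Gam y by (simp add: normal_Cons)
      show ?thesis
      proof (cases "(a + b) mod p = 0")
        case True
        then have "conjugate p w m" using cjw hred_snoc_Gam_Gam[OF "1.prems"(2) nmb va] by simp
        moreover have "conjugate p m (cyc_red p m)"
          using 1 w Gam y True nm \<open>2 \<le> length w \<and> _\<close> by simp
        ultimately show ?thesis using w Gam y True conjugate_trans "1.prems" by auto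
      next
        case False
        then show ?thesis using cjw hred_snoc_Gam_Gam[OF "1.prems"(2) nmb va] w Gam y by simp
      qed
    qed
  qed
qed

section \<open>Rotations\<close>

declare hd_append[simp]

definition is_rotation :: "'a list \<Rightarrow> 'a list \<Rightarrow> bool" where
  "is_rotation a b \<longleftrightarrow> (\<exists>n. b = rotate n a)"

lemma is_rotation_refl[simp]: "is_rotation a a"
  unfolding is_rotation_def by (metis rotate0 id_apply)

lemma is_rotation_trans: "is_rotation a b \<Longrightarrow> is_rotation b c \<Longrightarrow> is_rotation a c"
  unfolding is_rotation_def by (metis rotate_rotate)

lemma is_rotation_sym: "is_rotation a b \<Longrightarrow> is_rotation b a"
proof -
  assume "is_rotation a b"
  then obtain n where b: "b = rotate n a" by (auto simp: is_rotation_def)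
  show ?thesis
  proof (cases "a = []")
    case True then show ?thesis using b by simp
  next
    case False
    have "rotate (length a - n mod length a) b = rotate ((length a - n mod length a) + n) a"
      using b by (simp add: rotate_rotate)
    also have "\<dots> = a"
    proof (rule rotate_id)
      have "(length a - n mod length a + n) mod length a = (length a - n mod length a + n mod length a) mod length a"
        by (metis mod_add_right_eq)
      also have "\<dots> = 0" using False by simp
      finally show "(length a - n mod length a + n) mod length a = 0" .
    qed
    finally show ?thesis unfolding is_rotation_def by metis
  qed
qed

lemma is_rotation_rotate1: "is_rotation (x # m) (m @ [x])"
  unfolding is_rotation_def by (metis rotate1.simps(2) rotate_Suc rotate0 id_apply)

lemma is_rotation_rotate1': "is_rotation (m @ [x]) (x # m)"
  using is_rotation_rotate1 is_rotation_sym by metis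

lemma rev_rotate: "rev (rotate s xs) = rotate (length xs - s mod length xs) (rev xs)"
proof (cases "xs = []")
  case True then show ?thesis by simp
next
  case False
  define L where "L = length xs"
  have L: "0 < L" using False L_def by simp
  have "rotate (L - s mod L) (rev xs) = rev (rotate (L - (L - s mod L) mod L) xs)"
    using rotate_rev L_def by simp
  also have "rotate (L - (L - s mod L) mod L) xs = rotate s xs"
  proof (cases "s mod L = 0")
    case True then show ?thesis using L L_def by simp
  next
    case False
    have "s mod L < L" using L by simp
    then have "(L - s mod L) mod L = L - s mod L" using False by simp
    then have "L - (L - s mod L) mod L = s mod L" using \<open>s mod L < L\<close> by simp
    then show ?thesis using L_def by (metis rotate_conv_mod)
  qed
  finally show ?thesis using L_def by simp
qed

lemma winv_rotate: "winv p (rotate s c) = rotate (length c - s mod length c) (winv p c)"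
  by (simp add: rotate_map[symmetric] rev_rotate)

lemma rotate_mod_eq: "a mod length c = b mod length c \<Longrightarrow> rotate a c = rotate b c"
  by (metis rotate_conv_mod)

lemma rotate_double_eq_if_winv_rotate1:
  assumes "winv p c = rotate1 c" "winv p (rotate s c) = rotate1 (rotate s c)" "c \<noteq> []"
  shows "rotate (2 * s) c = c"
proof -
  define L where "L = length c"
  have L: "0 < L" using assms L_def by simp
  have "rotate (1 + s) c = rotate (L - s mod L + 1) c"
  proof -
    have "rotate (1 + s) c = rotate1 (rotate s c)" by (simp add: rotate_rotate[symmetric])
    also have "\<dots> = winv p (rotate s c)" using assms by simp
    also have "\<dots> = rotate (L - s mod L) (rotate1 c)" using winv_rotate assms L_def by simp
    also have "\<dots> = rotate (L - s mod L + 1) c"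
      by (simp add: rotate_rotate[symmetric] rotate1_rotate_swap)
    finally show ?thesis .
  qed
  then have "rotate (s mod L + L - 1) (rotate (1 + s) c) = rotate (s mod L + L - 1) (rotate (L - s mod L + 1) c)"
    by simp
  then have e: "rotate (s mod L + L - 1 + (1 + s)) c = rotate (s mod L + L - 1 + (L - s mod L + 1)) c"
    by (simp only: rotate_rotate)
  have "s mod L < L" using L by simp
  have a1: "s mod L + L - 1 + (1 + s) = s mod L + s + L" using L by simp
  have a2: "s mod L + L - 1 + (L - s mod L + 1) = 2 * L" using L \<open>s mod L < L\<close> by simp
  have "rotate (2 * s) c = rotate (s mod L + s + L) c"
  proof (rule rotate_mod_eq)
    have "(s mod L + s + L) mod L = (s mod L + s) mod L" by simp
    also have "\<dots> = (s + s) mod L" by (simp add: mod_add_left_eq)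
    finally show "2 * s mod length c = (s mod L + s + L) mod length c" using L_def by (simp add: mult_2)
  qed
  also have "\<dots> = rotate (2 * L) c" using e unfolding a1 a2 .
  also have "\<dots> = c" using L_def by simp
  finally show ?thesis .
qed

lemma rotate_mult: "rotate d c = c \<Longrightarrow> rotate (d * q) c = c"
proof (induction q)
  case (Suc q)
  have "rotate (d * Suc q) c = rotate d (rotate (d * q) c)" by (simp add: rotate_rotate add.commute)
  then show ?case using Suc by simp
qed simp

lemma rotate_mod_period: "rotate d c = c \<Longrightarrow> rotate t c = rotate (t mod d) c"
proof -
  assume d: "rotate d c = c"
  have "rotate t c = rotate (t mod d + d * (t div d)) c" by simp
  also have "\<dots> = rotate (t mod d) (rotate (d * (t div d)) c)" by (simp add: rotate_rotate)
  finally show ?thesis using rotate_mult[OF d] by simp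
qed

lemma rotate_double_fixed_two_values:
  assumes "c \<noteq> []"
  shows "\<exists>a b. \<forall>s. rotate (2 * s) c = c \<longrightarrow> rotate s c \<in> {a, b}"
proof -
  define d where "d = (LEAST t. 0 < t \<and> rotate t c = c)"
  have ex: "0 < length c \<and> rotate (length c) c = c" using assms by simp
  have d: "0 < d" "rotate d c = c"
    using LeastI[of "\<lambda>t. 0 < t \<and> rotate t c = c", OF ex] d_def by auto
  have per: "t mod d = 0" if "rotate t c = c" for t
  proof (rule ccontr)
    assume ne: "t mod d \<noteq> 0"
    have "rotate (t mod d) c = c" using rotate_mod_period[OF d(2), of t] that by simp
    then have "0 < t mod d \<and> rotate (t mod d) c = c" using ne by simp
    then have "d \<le> t mod d" unfolding d_def by (rule Least_le)
    moreover have "t mod d < d" using d by simp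
    ultimately show False by simp
  qed
  have "rotate s c \<in> {c, rotate (d div 2) c}" if "rotate (2 * s) c = c" for s
  proof -
    define r where "r = s mod d"
    have r: "r < d" using d r_def by simp
    have "(2 * s) mod d = 0" using per that by blast
    then have "(2 * r) mod d = 0" unfolding r_def by (metis mod_mult_right_eq)
    then have "d dvd 2 * r" by (simp add: mod_eq_0_iff_dvd)
    then obtain q where q: "2 * r = d * q" by (rule dvdE)
    have "q < 2"
    proof (rule ccontr)
      assume "\<not> q < 2"
      then have "d * 2 \<le> d * q" by simp
      then show False using q r by linarith
    qed
    then have "r = 0 \<or> r = d div 2" using q by (cases q) auto
    then show ?thesis using rotate_mod_period[OF d(2), of s] r_def by auto
  qed
  then show ?thesis by blast
qed

lemma is_rotation_rev_rotate1: "is_rotation (rev zs) (rev (rotate1 zs))"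
  by (cases zs) (auto intro: is_rotation_rotate1')

lemma is_rotation_rev_rotate: "is_rotation (rev zs) (rev (rotate n zs))"
proof (induction n)
  case (Suc n)
  then show ?case using is_rotation_rev_rotate1[of "rotate n zs"] is_rotation_trans by auto
qed simp

lemma is_rotation_winv: "is_rotation a b \<Longrightarrow> is_rotation (winv p a) (winv p b)"
  unfolding is_rotation_def[of a b] using is_rotation_rev_rotate by (metis rotate_map)

section \<open>Cyclic reductions of conjugate words are rotations of each other\<close>

lemma ends_cases:
  obtains "w = []" | z where "w = [z]" | y m z where "w = y # m @ [z]"
proof (cases "2 \<le> length w")
  case True then show ?thesis using that(3) by (meson split_ends)
next
  case False then show ?thesis using that(1,2) by (cases w; cases "tl w") auto
qed

lemma cyc_red_conj_Iota:
  assumes "normal p w" "0 < p"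
  shows "is_rotation (cyc_red p w) (cyc_red p (hred p (Iota # w @ [Iota])))"
proof (cases w rule: ends_cases)
  case 1 then show ?thesis using assms hred_cancel_linv_left[of p "[]" Iota "[]"] by simp
next
  case (2 z)
  show ?thesis
  proof (cases z)
    case Iota
    then show ?thesis using 2 assms hred_cancel_linv_left[of p "[]" Iota "[Iota]"]
      by (simp add: hred_normal normal_Cons)
  next
    case (Gam a)
    have "normal p [Iota, Gam a, Iota]" using assms 2 Gam by (simp add: normal_Cons)
    then show ?thesis using 2 Gam cyc_red_Iota_Iota[of p "[Gam a]"] by (simp add: hred_normal)
  qed
next
  case (3 y m z)
  have nm: "normal p m" using normal_ends assms 3 by blast
  show ?thesis
  proof (cases y; cases z)
    assume yz: "y = Iota" "z = Iota"
    have "hred p (Iota # w @ [Iota]) = m"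
      using 3 yz assms hred_cancel_linv_left[of p "[]" Iota "m @ [Iota, Iota]"]
        hred_cancel_linv_left[of p m Iota "[]"] nm by (simp add: hred_normal)
    then show ?thesis using 3 yz by simp
  next
    fix b assume yz: "y = Iota" "z = Gam b"
    have n2: "normal p (m @ [Gam b, Iota])" using assms 3 yz by (auto simp: normal_Cons normal_append)
    have "hred p (Iota # w @ [Iota]) = m @ [Gam b, Iota]"
      using 3 yz assms hred_cancel_linv_left[of p "[]" Iota "m @ [Gam b, Iota]"] n2 by (simp add: hred_normal)
    moreover have "ends_alternate (m @ [Gam b, Iota])"
      using assms 3 yz by (cases m) (auto simp: ends_alternate_def normal_Cons)
    moreover have "ends_alternate w" using 3 yz by (simp add: ends_alternate_def)
    ultimately show ?thesis
      using 3 yz is_rotation_rotate1[of Iota "m @ [Gam b]"] by (simp add: cyc_red_ends_alternate)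
  next
    fix a assume yz: "y = Gam a" "z = Iota"
    have n2: "normal p (Iota # Gam a # m)"
      using assms 3 yz by (cases m) (auto simp: normal_Cons normal_append)
    have "hred p (Iota # w @ [Iota]) = Iota # Gam a # m"
      using 3 yz assms hred_cancel_linv_left[of p "Iota # Gam a # m" Iota "[]"] n2 by (simp add: hred_normal)
    moreover have "ends_alternate (Iota # Gam a # m)"
      using assms 3 yz normal_ends[of p "Gam a" m Iota]
        by (cases m rule: rev_cases) (auto simp: ends_alternate_def)
    moreover have "ends_alternate w" using 3 yz by (simp add: ends_alternate_def)
    ultimately show ?thesis
      using 3 yz is_rotation_rotate1'[of "Gam a # m" Iota] by (simp add: cyc_red_ends_alternate)
  next
    fix a b assume yz: "y = Gam a" "z = Gam b"
    have "normal p (Iota # w @ [Iota])" using assms 3 yz by (cases m) (auto simp: normal_Cons normal_append)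
    then show ?thesis using 3 yz by (simp add: hred_normal del: append_Cons)
  qed
qed

lemma mod_less_double: "(x::nat) < 2 * p \<Longrightarrow> x mod p = (if x < p then x else x - p)"
  by (simp add: le_mod_geq)

lemma mod_add_diff_cancel:
  "0 < k \<Longrightarrow> k < (p::nat) \<Longrightarrow> a < p \<Longrightarrow> (k + a + (p - k)) mod p = a"
  by (metis add.commute add_diff_inverse_nat add.left_commute less_imp_le_nat mod_add_self2 mod_less
      not_less)

lemma mod_conj_facts:
  fixes a b k p :: nat
  assumes "0 < a" "a < p" "0 < b" "b < p" "0 < k" "k < p"
  shows "((k + a) mod p + (p - k + b) mod p) mod p = (a + b) mod p"
    "(k + a) mod p = 0 \<Longrightarrow> (p - k + b) mod p = (a + b) mod p"
    "(p - k + b) mod p = 0 \<Longrightarrow> (k + a) mod p = (a + b) mod p"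
    "(p - k + b) mod p = 0 \<longleftrightarrow> b = k"
    "(k + (p - k + b) mod p) mod p = b"
    "(k + a) mod p = 0 \<longleftrightarrow> a = p - k"
    "((k + a) mod p + (p - k)) mod p = a"
proof -
  define c1 where "c1 = (k + a) mod p"
  define c2 where "c2 = (p - k + b) mod p"
  define s where "s = (a + b) mod p"
  have h1: "c1 = (if k + a < p then k + a else k + a - p)" unfolding c1_def
    using assms by (intro mod_less_double) simp
  have h2: "c2 = (if p - k + b < p then p - k + b else p - k + b - p)" unfolding c2_def
    using assms by (intro mod_less_double) simp
  have h3: "s = (if a + b < p then a + b else a + b - p)" unfolding s_def
    using assms by (intro mod_less_double) simp
  have lt: "c1 < p" "c2 < p" using assms unfolding c1_def c2_def by simp_all
  have h4: "(c1 + c2) mod p = (if c1 + c2 < p then c1 + c2 else c1 + c2 - p)"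
    using lt by (intro mod_less_double) simp
  have h5: "(k + c2) mod p = (if k + c2 < p then k + c2 else k + c2 - p)"
    using lt assms by (intro mod_less_double) simp
  have h6: "(c1 + (p - k)) mod p = (if c1 + (p - k) < p then c1 + (p - k) else c1 + (p - k) - p)"
    using lt assms by (intro mod_less_double) simp
  show "((k + a) mod p + (p - k + b) mod p) mod p = (a + b) mod p"
    unfolding c1_def[symmetric] c2_def[symmetric] s_def[symmetric] h4
      using h1 h2 h3 assms by (simp split: if_split_asm)
  show "(k + a) mod p = 0 \<Longrightarrow> (p - k + b) mod p = (a + b) mod p"
    unfolding c1_def[symmetric] c2_def[symmetric] s_def[symmetric]
      using h1 h2 h3 assms by (simp split: if_split_asm)
  show "(p - k + b) mod p = 0 \<Longrightarrow> (k + a) mod p = (a + b) mod p"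
    unfolding c1_def[symmetric] c2_def[symmetric] s_def[symmetric]
      using h1 h2 h3 assms by (simp split: if_split_asm)
  show "(p - k + b) mod p = 0 \<longleftrightarrow> b = k"
    unfolding c2_def[symmetric] using h2 assms by (auto split: if_split_asm)
  show "(k + (p - k + b) mod p) mod p = b"
    unfolding c2_def[symmetric] h5 using h2 assms by (simp split: if_split_asm)
  show "(k + a) mod p = 0 \<longleftrightarrow> a = p - k"
    unfolding c1_def[symmetric] using h1 assms by (auto split: if_split_asm)
  show "((k + a) mod p + (p - k)) mod p = a"
    unfolding c1_def[symmetric] h6 using h1 assms by (simp split: if_split_asm)
qed

lemma cyc_red_conj_Gam_short:
  assumes "normal p w" "length w \<le> 1" "0 < k" "k < p"
  shows "is_rotation (cyc_red p w) (cyc_red p (hred p (Gam k # w @ [Gam (p - k)])))"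
proof (cases w rule: ends_cases)
  case 1
  have "hred p [Gam k, Gam (p - k)] = []"
    using hred_cancel_linv_right[of p "[]" "Gam k" "[]"] assms by simp
  then show ?thesis using 1 by simp
next
  case (2 z)
  show ?thesis
  proof (cases z)
    case Iota
    have "normal p [Gam k, Iota, Gam (p - k)]" using assms by (simp add: normal_Cons)
    then show ?thesis using 2 Iota cyc_red_Gam_Gam[of p k "[Iota]" "p - k"] assms by (simp add: hred_normal)
  next
    case (Gam a)
    have a: "0 < a" "a < p" using assms 2 Gam by (auto simp: normal_Cons)
    have vk: "valid_letter p (Gam (p - k))" using assms by simp
    have "hred p [Gam k, Gam a, Gam (p - k)] = hpush p (Gam k) (hpush p (Gam a) [Gam (p - k)])"
      using vk by (simp add: hred_def)
    also have "\<dots> = hpush p (Gam (k + a)) (hpush p (Gam (p - k)) [])"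
      by (subst hpush_Gam_Gam) (use vk assms in \<open>simp_all add: normal_Cons\<close>)
    also have "\<dots> = hpush p (Gam (k + a + (p - k))) []"
      by (rule hpush_Gam_Gam) (use assms in simp_all)
    also have "\<dots> = [Gam a]" using mod_add_diff_cancel[OF assms(3,4) a(2)] a by simp
    finally show ?thesis using 2 Gam by simp
  qed
next
  case (3 y m z)
  then show ?thesis using assms(2) by simp
qed

lemma cyc_red_conj_Gam_Iota_Gam:
  assumes "normal p w" "w = Iota # m @ [Gam b]" "0 < k" "k < p"
  shows "is_rotation (cyc_red p w) (cyc_red p (hred p (Gam k # w @ [Gam (p - k)])))"
proof -
  have b: "0 < b" "b < p" using assms normal_ends[of p Iota m "Gam b"] by auto
  have "hred p (Gam k # w @ [Gam (p - k)]) = hpush p (Gam k) (hred p ((Iota # m) @ [Gam b, Gam (p - k)]))"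
    using assms(2) by (simp add: hred_Cons)
  also have "hred p ((Iota # m) @ [Gam b, Gam (p - k)]) =
      (if (p - k + b) mod p = 0 then Iota # m else (Iota # m) @ [Gam ((p - k + b) mod p)])"
    using hred_snoc_Gam_Gam[of p "Iota # m" b "p - k"] assms by simp
  finally have e: "hred p (Gam k # w @ [Gam (p - k)]) =
      (if (p - k + b) mod p = 0 then Gam k # Iota # m else Gam k # Iota # m @ [Gam ((p - k + b) mod p)])"
    using assms by (simp add: hpush_Gam_not_Gam)
  have w: "cyc_red p w = w" using assms(2) by (simp add: cyc_red_ends_alternate ends_alternate_def)
  show ?thesis
  proof (cases "(p - k + b) mod p = 0")
    case True
    then have "b = k" using mod_conj_facts(4)[OF b b assms(3,4)] by simp
    have "m \<noteq> [] \<Longrightarrow> last m = Iota" using normal_ends[of p Iota m "Gam b"] assms by auto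
    then have "ends_alternate (Gam k # Iota # m)" by (cases m rule: rev_cases) (auto simp: ends_alternate_def)
    then show ?thesis
      using e True w cyc_red_ends_alternate assms(2) \<open>b = k\<close> is_rotation_rotate1'[of "Iota # m" "Gam b"] by simp
  next
    case False
    then show ?thesis using e w assms(2) cyc_red_Gam_Gam[of p k "Iota # m" "(p - k + b) mod p"]
        mod_conj_facts(5)[OF b b assms(3,4)] b by simp
  qed
qed

lemma cyc_red_conj_Gam_Gam_Iota:
  assumes "normal p w" "w = Gam a # m @ [Iota]" "0 < k" "k < p"
  shows "is_rotation (cyc_red p w) (cyc_red p (hred p (Gam k # w @ [Gam (p - k)])))"
proof -
  have a: "0 < a" "a < p" using assms normal_ends[of p "Gam a" m Iota] by auto
  have n2: "normal p (Gam a # m @ [Iota, Gam (p - k)])"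
    using assms by (cases m) (auto simp: normal_Cons normal_append split: if_splits)
  have e: "hred p (Gam k # w @ [Gam (p - k)]) = (if (k + a) mod p = 0 then m @ [Iota, Gam (p - k)]
      else Gam ((k + a) mod p) # m @ [Iota, Gam (p - k)])"
    using assms(2) hred_Cons[of p "Gam k" "Gam a # m @ [Iota, Gam (p - k)]"] hred_normal[OF n2] by simp
  have w: "cyc_red p w = w" using assms(2) by (simp add: cyc_red_ends_alternate ends_alternate_def)
  have r: "is_rotation w ((m @ [Iota]) @ [Gam a])"
    using assms(2) is_rotation_rotate1[of "Gam a" "m @ [Iota]"] by simp
  have "m \<noteq> [] \<Longrightarrow> hd m = Iota" using assms by (cases m) (auto simp: normal_Cons)
  then have ccr: "ends_alternate ((m @ [Iota]) @ [Gam a])" by (cases m) (auto simp: ends_alternate_def)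
  show ?thesis
  proof (cases "(k + a) mod p = 0")
    case True
    then have "a = p - k" using mod_conj_facts(6)[OF a a assms(3,4)] by simp
    then show ?thesis
      using e True r ccr w cyc_red_ends_alternate by (metis append.assoc append_Cons append_Nil)
  next
    case False
    have "cyc_red p (hred p (Gam k # w @ [Gam (p - k)])) = (m @ [Iota]) @ [Gam a]"
      using e False cyc_red_Gam_Gam[of p "(k + a) mod p" "m @ [Iota]" "p - k"]
        mod_conj_facts(7)[OF a a assms(3,4)] a by simp
    then show ?thesis using r w by simp
  qed
qed

lemma cyc_red_conj_Gam_Gam_Gam:
  assumes "normal p w" "w = Gam a # m @ [Gam b]" "0 < k" "k < p"
  shows "is_rotation (cyc_red p w) (cyc_red p (hred p (Gam k # w @ [Gam (p - k)])))"
proof -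
  have p: "0 < p" using assms by simp
  have ab: "0 < a" "a < p" "0 < b" "b < p" using assms normal_ends[of p "Gam a" m "Gam b"] by auto
  have mne: "m \<noteq> []" using assms by (auto simp: normal_Cons)
  have hm: "hd m = Iota" "last m = Iota" using normal_ends[of p "Gam a" m "Gam b"] assms mne by auto
  have nmb: "normal p (m @ [Gam b])" using assms by (simp add: normal_Cons)
  define c1 where "c1 = (k + a) mod p"
  define c2 where "c2 = (p - k + b) mod p"
  define R where "R = (if c2 = 0 then m else m @ [Gam c2])"
  have R: "hred p (m @ [Gam b, Gam (p - k)]) = R"
    using hred_snoc_Gam_Gam[OF p nmb] assms unfolding R_def c2_def by simp
  have hR: "hd R = Iota" "R \<noteq> []" using hm mne unfolding R_def by auto
  have e: "hred p (Gam k # w @ [Gam (p - k)]) = (if c1 = 0 then R else Gam c1 # R)"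
    using assms(2) R hR ab unfolding c1_def by (simp add: hred_Cons hpush_Gam_not_Gam)
  have F: "(c1 + c2) mod p = (a + b) mod p" "c1 = 0 \<Longrightarrow> c2 = (a + b) mod p"
    "c2 = 0 \<Longrightarrow> c1 = (a + b) mod p"
    using mod_conj_facts(1,2,3)[OF ab assms(3,4)] unfolding c1_def c2_def by auto
  have crw: "cyc_red p w = (if (a + b) mod p = 0 then cyc_red p m else m @ [Gam ((a + b) mod p)])"
    using assms(2) by simp
  show ?thesis
  proof (cases "c1 = 0"; cases "c2 = 0")
    assume c: "c1 = 0" "c2 = 0"
    then show ?thesis using e crw F unfolding R_def by simp
  next
    assume c: "c1 = 0" "c2 \<noteq> 0"
    have "ends_alternate (m @ [Gam c2])" using hm by (auto simp: ends_alternate_def)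
    then show ?thesis using e crw F c cyc_red_ends_alternate unfolding R_def by simp
  next
    assume c: "c1 \<noteq> 0" "c2 = 0"
    have "ends_alternate (Gam c1 # m)"
      using hm mne by (cases m rule: rev_cases) (auto simp: ends_alternate_def)
    then show ?thesis using e crw F c cyc_red_ends_alternate is_rotation_rotate1' unfolding R_def by simp
  next
    assume c: "c1 \<noteq> 0" "c2 \<noteq> 0"
    then show ?thesis using e crw F unfolding R_def by simp
  qed
qed

lemma cyc_red_conj_Gam:
  assumes "normal p w" "0 < k" "k < p"
  shows "is_rotation (cyc_red p w) (cyc_red p (hred p (Gam k # w @ [Gam (p - k)])))"
proof (cases w rule: ends_cases)
  case (3 y m z)
  show ?thesis
  proof (cases y; cases z)
    assume yz: "y = Iota" "z = Iota"
    have "normal p (Gam k # w @ [Gam (p - k)])"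
      using assms 3 yz by (cases m) (auto simp: normal_Cons normal_append)
    then show ?thesis using 3 yz cyc_red_Gam_Gam[of p k "Iota # m @ [Iota]" "p - k"] assms
      by (simp add: hred_normal)
  qed (use assms 3 cyc_red_conj_Gam_Iota_Gam cyc_red_conj_Gam_Gam_Iota cyc_red_conj_Gam_Gam_Gam in blast)+
next
  case 1
  then show ?thesis using cyc_red_conj_Gam_short[OF assms(1) _ assms(2,3)] by simp
next
  case (2 z)
  then show ?thesis using cyc_red_conj_Gam_short[OF assms(1) _ assms(2,3)] by simp
qed

lemma cyc_red_conj_letter:
  assumes "normal p w" "valid_letter p x" "0 < p"
  shows "is_rotation (cyc_red p w) (cyc_red p (hred p (x # w @ [linv p x])))"
proof (cases x)
  case Iota then show ?thesis using cyc_red_conj_Iota assms by simp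
next
  case (Gam k)
  then have "0 < k" "k < p" using assms by auto
  then show ?thesis using cyc_red_conj_Gam[OF assms(1)] Gam by simp
qed

lemma cyc_red_conj_word:
  "valid_word p h \<Longrightarrow> normal p g \<Longrightarrow> 0 < p \<Longrightarrow> is_rotation (cyc_red p g) (cyc_red p (hred p (h @ g @ winv p h)))"
proof (induction h)
  case Nil then show ?case by (simp add: hred_normal)
next
  case (Cons x h)
  have vx: "valid_letter p x" "valid_word p h" using Cons.prems by (auto simp: valid_word_def)
  have "hred p ((x # h) @ g @ winv p (x # h)) = hred p ([x] @ hred p (h @ g @ winv p h) @ [linv p x])"
    using Cons.prems hred_hred_middle[of p "[x]" "h @ g @ winv p h" "[linv p x]"] by simp
  then have "is_rotation (cyc_red p (hred p (h @ g @ winv p h))) (cyc_red p (hred p ((x # h) @ g @ winv p (x # h))))"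
    using cyc_red_conj_letter[OF normal_hred[OF Cons.prems(3), of "h @ g @ winv p h"] vx(1) Cons.prems(3)]
      by simp
  then show ?case using Cons vx is_rotation_trans by blast
qed

lemma conjugate_cyc_red_rotation:
  "conjugate p g w \<Longrightarrow> normal p g \<Longrightarrow> 0 < p \<Longrightarrow> is_rotation (cyc_red p g) (cyc_red p w)"
  unfolding conjugate_def using cyc_red_conj_word by blast

lemma sum_list_rotate: "sum_list (rotate n (xs :: nat list)) = sum_list xs"
proof -
  have "sum_list xs = sum_list (take (n mod length xs) xs @ drop (n mod length xs) xs)" by simp
  then show ?thesis by (simp only: rotate_drop_take sum_list_append)
qed

lemma wlen_rotate: "wlen p (rotate n xs) = wlen p xs"
  unfolding wlen_def by (metis rotate_map sum_list_rotate)

lemma wlen_is_rotation: "is_rotation a b \<Longrightarrow> wlen p a = wlen p b"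
  unfolding is_rotation_def using wlen_rotate by metis

lemma cyc_red_in_hconjclass:
  "normal p g \<Longrightarrow> 0 < p \<Longrightarrow> cyc_red p g \<in> hconjclass p g"
  using conjugate_cyc_red by (simp add: hconjclass_conv_conjugate)

lemma cyc_reduced_cyc_red: "normal p g \<Longrightarrow> 0 < p \<Longrightarrow> cyc_reduced p (cyc_red p g)"
  using normal_cyc_red by (simp add: cyc_reduced_iff_normal)

lemma hconjclass_cyc_reduced_is_rotation:
  assumes "normal p g" "0 < p" "w \<in> hconjclass p g" "cyc_reduced p w"
  shows "is_rotation (cyc_red p g) w"
proof -
  have "conjugate p g w" "ends_alternate w"
    using assms by (auto simp: hconjclass_conv_conjugate cyc_reduced_iff_normal)
  then show ?thesis using conjugate_cyc_red_rotation assms cyc_red_ends_alternate by metis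
qed

lemma class_len_hconjclass:
  assumes "normal p g" "0 < p"
  shows "class_len p (hconjclass p g) = wlen p (cyc_red p g)"
proof -
  have "wlen p ` {w \<in> hconjclass p g. cyc_reduced p w} = {wlen p (cyc_red p g)}"
  proof
    show "wlen p ` {w \<in> hconjclass p g. cyc_reduced p w} \<subseteq> {wlen p (cyc_red p g)}"
      using hconjclass_cyc_reduced_is_rotation[OF assms] wlen_is_rotation by fastforce
    show "{wlen p (cyc_red p g)} \<subseteq> wlen p ` {w \<in> hconjclass p g. cyc_reduced p w}"
      using cyc_red_in_hconjclass[OF assms] cyc_reduced_cyc_red[OF assms] by blast
  qed
  then show ?thesis by (simp add: class_len_def)
qed

lemma mod_linv_add:
  fixes a b p :: nat
  assumes "0 < a" "a < p" "0 < b" "b < p"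
  shows "(p - b + (p - a)) mod p = (if (a + b) mod p = 0 then 0 else p - (a + b) mod p)"
proof -
  define s where "s = (a + b) mod p"
  have h3: "s = (if a + b < p then a + b else a + b - p)" unfolding s_def
    using assms by (intro mod_less_double) simp
  have h: "(p - b + (p - a)) mod p = (if p - b + (p - a) < p then p - b + (p - a) else p - b + (p - a) - p)"
    using assms by (intro mod_less_double) simp
  show ?thesis unfolding s_def[symmetric] h using h3 assms by (auto split: if_split_asm)
qed

lemma winv_cyc_red:
  "normal p w \<Longrightarrow> 0 < p \<Longrightarrow> is_rotation (winv p (cyc_red p w)) (cyc_red p (winv p w))"
proof (induction p w rule: cyc_red.induct)
  case (1 p w)
  show ?case
  proof (cases "2 \<le> length w \<and> same_factor (hd w) (last w)")
    case False
    then have "\<not> (2 \<le> length (winv p w) \<and> same_factor (hd (winv p w)) (last (winv p w)))"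
      by (cases w rule: rev_cases) (auto simp: same_factor_linv same_factor_sym last_rev hd_rev hd_map last_map)
    then show ?thesis using False by (simp add: cyc_red_id)
  next
    case True
    then obtain x m y where w: "w = x # m @ [y]" by (meson split_ends)
    have nm: "normal p m" using normal_ends "1.prems" w by blast
    show ?thesis
    proof (cases x)
      case Iota
      then have y: "y = Iota" using True w by simp
      have "winv p w = Iota # winv p m @ [Iota]" using w Iota y by simp
      then show ?thesis using 1 w Iota y True nm by simp
    next
      case (Gam a)
      then obtain b where y: "y = Gam b" using True w by (cases y) auto
      have ab: "0 < a" "a < p" "0 < b" "b < p"
        using "1.prems" w Gam y by (auto simp: normal_Cons normal_append)
      have iw: "winv p w = Gam (p - b) # winv p m @ [Gam (p - a)]" using w Gam y ab by simp
      have md: "(p - b + (p - a)) mod p = (if (a + b) mod p = 0 then 0 else p - (a + b) mod p)"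
        using mod_linv_add ab by blast
      show ?thesis
      proof (cases "(a + b) mod p = 0")
        case True
        then show ?thesis using 1 w Gam y nm iw md \<open>2 \<le> length w \<and> _\<close> by simp
      next
        case False
        have lt: "(a + b) mod p < p" using ab by simp
        have "winv p (cyc_red p w) = Gam (p - (a + b) mod p) # winv p m"
          using w Gam y False lt by simp
        moreover have "cyc_red p (winv p w) = winv p m @ [Gam (p - (a + b) mod p)]"
          using iw md False lt by simp
        ultimately show ?thesis using is_rotation_rotate1 by simp
      qed
    qed
  qed
qed

lemma reciprocal_cyc_red_rotation:
  assumes "normal p g" "0 < p" "g' \<in> hconjclass p g" "hreciprocal p g'"
  shows "is_rotation (cyc_red p g) (winv p (cyc_red p g))"
proof -
  have ng': "normal p g'" using assms by (simp add: hreciprocal_def hreduced_iff_normal)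
  have "hconj p g' (hinv p g')" using assms by (simp add: hreciprocal_def)
  then have c1: "conjugate p g' (winv p g')" using ng' assms by (simp add: hconj_iff_conjugate hinv_normal)
  have c2: "conjugate p g g'" using assms by (simp add: hconjclass_conv_conjugate)
  have r1: "is_rotation (cyc_red p g) (cyc_red p g')" using conjugate_cyc_red_rotation c2 assms by blast
  have r2: "is_rotation (cyc_red p g') (cyc_red p (winv p g'))"
    using conjugate_cyc_red_rotation c1 ng' assms by blast
  have r3: "is_rotation (winv p (cyc_red p g')) (cyc_red p (winv p g'))" using winv_cyc_red ng' assms by blast
  have r4: "is_rotation (winv p (cyc_red p g')) (winv p (cyc_red p g))"
    using is_rotation_winv is_rotation_sym r1 by blast
  show ?thesis using r1 r2 r3 r4 is_rotation_trans is_rotation_sym by meson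
qed

section \<open>Inverse-symmetric rotations\<close>

definition cyc_nth :: "'a list \<Rightarrow> int \<Rightarrow> 'a" where
  "cyc_nth c z = c ! nat (z mod int (length c))"

lemma cyc_nth_cong: "z mod int (length c) = w mod int (length c) \<Longrightarrow> cyc_nth c z = cyc_nth c w"
  by (simp add: cyc_nth_def)

lemma cyc_nth_of_nat: "cyc_nth c (int i) = c ! (i mod length c)"
  by (simp add: cyc_nth_def flip: of_nat_mod)

lemma cyc_nth_rotate:
  assumes "c \<noteq> []"
  shows "cyc_nth (rotate t c) z = cyc_nth c (int t + z)"
proof -
  define i where "i = nat (z mod int (length c))"
  have i: "i < length c" "int i = z mod int (length c)"
    using assms unfolding i_def by (simp_all add: nat_less_iff)
  have "cyc_nth (rotate t c) z = c ! ((t + i) mod length c)"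
    using i by (simp add: cyc_nth_def i_def nth_rotate)
  also have "\<dots> = cyc_nth c (int t + z)"
    unfolding cyc_nth_of_nat[symmetric] using i(2) by (intro cyc_nth_cong) (simp add: mod_add_right_eq)
  finally show ?thesis .
qed

lemma cyc_nth_rev:
  assumes "c \<noteq> []"
  shows "cyc_nth (rev c) z = cyc_nth c (-1 - z)"
proof -
  define i where "i = nat (z mod int (length c))"
  have i: "i < length c" "int i = z mod int (length c)"
    using assms unfolding i_def by (simp_all add: nat_less_iff)
  have "cyc_nth (rev c) z = c ! (length c - Suc i)"
    using i by (simp add: cyc_nth_def i_def rev_nth)
  also have "\<dots> = cyc_nth c (int (length c - Suc i))"
    using i cyc_nth_of_nat[of c "length c - Suc i"] by (simp only: mod_less diff_less zero_less_Suc)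
  also have "\<dots> = cyc_nth c (-1 - z)"
  proof (rule cyc_nth_cong)
    have "int (length c - Suc i) = (-1 - int i) + int (length c)" using i by simp
    then show "int (length c - Suc i) mod int (length c) = (-1 - z) mod int (length c)"
      using i(2) by (simp add: mod_diff_right_eq)
  qed
  finally show ?thesis .
qed

lemma cyc_nth_map: "cyc_nth (map f c) z = f (cyc_nth c z)" if "c \<noteq> []"
  using that by (simp add: cyc_nth_def nat_less_iff)

lemma cyc_nth_alternate:
  assumes "normal p c" "ends_alternate c" "2 \<le> length c"
  shows "\<not> same_factor (cyc_nth c z) (cyc_nth c (z + 1))"
proof -
  define n where "n = length c"
  have n: "0 < n" using assms n_def by linarith
  define i where "i = nat (z mod int n)"
  have i: "i < n" "z mod int n = int i" using n unfolding i_def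
    by (simp_all add: nat_less_iff)
  have cz: "cyc_nth c z = c ! i" unfolding cyc_nth_def i_def n_def by simp
  have cz1: "cyc_nth c (z + 1) = cyc_nth c (int (i + 1))"
  proof (rule cyc_nth_cong)
    have "(z + 1) mod int n = (z mod int n + 1) mod int n" by (rule mod_add_left_eq[symmetric])
    then show "(z + 1) mod int (length c) = int (i + 1) mod int (length c)"
      using i(2) n_def by (simp add: add.commute)
  qed
  show ?thesis
  proof (cases "i + 1 < n")
    case True
    then have "cyc_nth c (z + 1) = c ! (i + 1)" using cz1 cyc_nth_of_nat[of c "i + 1"] n_def by simp
    then show ?thesis using cz successively_nth[of _ c i] assms True n_def unfolding normal_def by auto
  next
    case False
    then have ii: "i = n - 1" using i by simp
    have "cyc_nth c (z + 1) = c ! 0" using cz1 cyc_nth_of_nat[of c "i + 1"] ii n n_def by simp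
    moreover have "c \<noteq> []" using n n_def by auto
    then have "hd c = c ! 0" "last c = c ! (n - 1)" by (simp_all add: hd_conv_nth last_conv_nth n_def)
    ultimately show ?thesis using cz ii assms by (simp add: ends_alternate_def same_factor_sym)
  qed
qed

lemma normal_same_factor_parity:
  "normal p c \<Longrightarrow> i < length c \<Longrightarrow> same_factor (c ! 0) (c ! i) = even i"
proof (induction i)
  case 0 then show ?case by (simp add: same_factor_refl)
next
  case (Suc i)
  have "\<not> same_factor (c ! i) (c ! Suc i)"
    using Suc.prems successively_nth unfolding normal_def by fastforce
  moreover have "same_factor (c ! 0) (c ! i) = even i" using Suc by simp
  ultimately show ?case
    using same_factor_alt[of "c ! i" "c ! Suc i" "c ! 0"] same_factor_sym[of "c ! i" "c ! 0"]
    same_factor_sym[of "c ! Suc i" "c ! 0"] by auto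
qed

lemma even_length_ends_alternate:
  assumes "normal p c" "ends_alternate c" "2 \<le> length c"
  shows "even (length c)"
proof -
  have "\<not> same_factor (hd c) (last c)" using assms by (simp add: ends_alternate_def)
  moreover have "c \<noteq> []" using assms by auto
  then have "hd c = c ! 0" "last c = c ! (length c - 1)"
    by (simp_all add: hd_conv_nth last_conv_nth)
  ultimately have "odd (length c - 1)"
    using normal_same_factor_parity[OF assms(1), of "length c - 1"] assms by simp
  then show ?thesis using assms by (cases "length c") auto
qed

definition inv_symmetric :: "nat \<Rightarrow> hletter list \<Rightarrow> bool" where
  "inv_symmetric p d \<longleftrightarrow> (\<forall>i<length d. d ! i = linv p (d ! ((length d - i) mod length d)))"

lemma inv_symmetricI:
  assumes "d \<noteq> []" "\<And>z. cyc_nth d z = linv p (cyc_nth d (- z))"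
  shows "inv_symmetric p d"
  unfolding inv_symmetric_def
proof (intro allI impI)
  fix i assume i: "i < length d"
  have "int (length d - i) = - int i + int (length d)" using i by simp
  then have "d ! ((length d - i) mod length d) = cyc_nth d (- int i)"
    unfolding cyc_nth_of_nat[symmetric] by (intro cyc_nth_cong) simp
  then show "d ! i = linv p (d ! ((length d - i) mod length d))"
    using assms(2)[of "int i"] i by (simp add: cyc_nth_of_nat)
qed

text \<open>If c^-1 is the rotation of c by r, then r is odd because letters alternate between the
  two factors; rotating c by half of r - 1 centres the symmetry.\<close>

lemma inv_symmetric_rotation_exists:
  assumes "normal p c" "ends_alternate c" "2 \<le> length c" "is_rotation c (winv p c)"
  shows "\<exists>t. inv_symmetric p (rotate t c)"
proof -
  obtain r where r: "winv p c = rotate r c" using assms(4) by (auto simp: is_rotation_def)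
  have c: "c \<noteq> []" using assms(3) by auto
  have H: "cyc_nth c (int r + z) = linv p (cyc_nth c (-1 - z))" for z
    using arg_cong[OF r, of "\<lambda>d. cyc_nth d z"] c by (simp add: cyc_nth_rotate cyc_nth_rev cyc_nth_map)
  have "even (int r - 1)"
  proof (rule ccontr)
    assume "odd (int r - 1)"
    then obtain j where j: "int r - 1 = 2 * j + 1" by (rule oddE)
    have "cyc_nth c (j + 1) = linv p (cyc_nth c j)"
      using H[of "j + 1 - int r"] j by (simp add: algebra_simps)
    then have "same_factor (cyc_nth c j) (cyc_nth c (j + 1))"
      using same_factor_linv_self[of p "cyc_nth c j"] same_factor_sym by metis
    then show False using cyc_nth_alternate assms by blast
  qed
  then obtain T where T: "int r - 1 = 2 * T" by (rule evenE)
  define t where "t = nat (T mod int (length c))"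
  have t: "cyc_nth (rotate t c) z = cyc_nth c (T + z)" for z
    unfolding cyc_nth_rotate[OF c] t_def using c by (intro cyc_nth_cong) (simp add: mod_add_left_eq)
  have "inv_symmetric p (rotate t c)"
  proof (rule inv_symmetricI)
    fix z
    show "cyc_nth (rotate t c) z = linv p (cyc_nth (rotate t c) (- z))"
      using H[of "T + z - int r"] T unfolding t by (simp add: algebra_simps)
  qed (use c in simp)
  then show ?thesis by blast
qed

lemma llen_ge_1: "valid_letter p x \<Longrightarrow> 1 \<le> llen p x"
  by (cases x) auto

lemma llen_le_p: "0 < p \<Longrightarrow> llen p x \<le> p"
  by (cases x) auto

lemma llen_linv: "valid_letter p x \<Longrightarrow> llen p (linv p x) = llen p x"
  by (cases x) auto

lemma wlen_Nil[simp]: "wlen p [] = 0" by (simp add: wlen_def)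

lemma wlen_Cons[simp]: "wlen p (x # w) = llen p x + wlen p w" by (simp add: wlen_def)

lemma wlen_append[simp]: "wlen p (u @ v) = wlen p u + wlen p v" by (simp add: wlen_def)

lemma wlen_winv: "valid_word p w \<Longrightarrow> wlen p (winv p w) = wlen p w"
  by (induction w) (auto simp: valid_word_def llen_linv)

lemma length_le_wlen: "valid_word p w \<Longrightarrow> length w \<le> wlen p w"
  by (induction w) (auto simp: valid_word_def dest: llen_ge_1)

lemma wlen_le_mult_length: "0 < p \<Longrightarrow> wlen p w \<le> p * length w"
  by (induction w) (auto intro: add_mono llen_le_p)

section \<open>Reciprocal classes and their symmetric representatives\<close>

lemma rotate1_conjugate:
  assumes "normal p c" "ends_alternate c" "0 < p"
  shows "normal p (rotate1 c) \<and> ends_alternate (rotate1 c) \<and> conjugate p c (rotate1 c)"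
proof (cases "2 \<le> length c")
  case False then show ?thesis using assms conjugate_refl by simp
next
  case True
  then obtain x w where c: "c = x # w" "w \<noteq> []" by (cases c; cases "tl c") auto
  have vx: "valid_letter p x" using assms c by (simp add: normal_Cons)
  have n1: "normal p (w @ [x])"
    using assms c True by (auto simp: normal_Cons normal_append ends_alternate_def same_factor_sym)
  have c1: "ends_alternate (w @ [x])"
    using assms c by (cases w) (auto simp: normal_Cons ends_alternate_def same_factor_sym)
  have "hred p (linv p x # c @ [linv p (linv p x)]) = w @ [x]"
    using c hred_cancel_linv_left[of p "[]" x "w @ [x]"] assms n1 by (simp add: linv_linv vx hred_normal)
  then have "conjugate p c (w @ [x])" using conjugate_by_letter[OF valid_letter_linv[OF vx], of c] by simp
  then show ?thesis using n1 c1 c by simp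
qed

lemma rotate_conjugate:
  "normal p c \<Longrightarrow> ends_alternate c \<Longrightarrow> 0 < p \<Longrightarrow>
    normal p (rotate t c) \<and> ends_alternate (rotate t c) \<and> conjugate p c (rotate t c)"
proof (induction t)
  case 0 then show ?case using conjugate_refl by simp
next
  case (Suc t)
  then show ?case using rotate1_conjugate[of p "rotate t c"] conjugate_trans by auto
qed

definition symmetric_rep :: "nat \<Rightarrow> hletter list \<Rightarrow> bool" where
  "symmetric_rep p c \<longleftrightarrow> normal p c \<and> ends_alternate c \<and> (length c \<le> 1 \<or> inv_symmetric p c)"

definition half_word :: "hletter list \<Rightarrow> hletter list" where
  "half_word c = (if length c \<le> 1 then c else take (length c div 2 + 1) c)"

lemma inv_symmetric_eqI:
  assumes "inv_symmetric p c1" "inv_symmetric p c2" "length c1 = length c2"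
    and "take (length c1 div 2 + 1) c1 = take (length c1 div 2 + 1) c2"
  shows "c1 = c2"
proof (rule nth_equalityI)
  define n where "n = length c1"
  have low: "c1 ! j = c2 ! j" if "j \<le> n div 2" for j
  proof -
    have "take (n div 2 + 1) c1 ! j = take (n div 2 + 1) c2 ! j" using assms(4) n_def by simp
    then show ?thesis using that by simp
  qed
  fix i assume i: "i < length c1"
  show "c1 ! i = c2 ! i"
  proof (cases "i \<le> n div 2")
    case False
    then have "(n - i) mod n = n - i" "n - i \<le> n div 2" using i n_def by auto
    moreover have "c1 ! i = linv p (c1 ! ((n - i) mod n))" "c2 ! i = linv p (c2 ! ((n - i) mod n))"
      using assms(1-3) i n_def by (simp_all add: inv_symmetric_def)
    ultimately show ?thesis using low by simp
  qed (use low in simp)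
qed (rule assms(3))

lemma half_word_inj:
  assumes "symmetric_rep p c1" "symmetric_rep p c2" "half_word c1 = half_word c2"
  shows "c1 = c2"
proof (cases "length c1 \<le> 1 \<or> length c2 \<le> 1")
  case True
  then show ?thesis using assms(3) by (auto simp: half_word_def split: if_splits)
next
  case False
  then have "even (length c1)" "even (length c2)"
    using assms(1,2) even_length_ends_alternate by (auto simp: symmetric_rep_def)
  moreover have "length c1 div 2 = length c2 div 2"
    using arg_cong[OF assms(3), of length] False by (simp add: half_word_def)
  ultimately have "length c1 = length c2" by (metis dvd_mult_div_cancel)
  then show ?thesis
    using inv_symmetric_eqI[of p c1 c2] assms False by (simp add: symmetric_rep_def half_word_def)
qed

lemma inv_symmetric_drop_half:
  assumes "inv_symmetric p c" "length c = 2 * m + 2"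
  shows "drop (m + 2) c = winv p (take m (tl c))"
proof (rule nth_equalityI)
  show "length (drop (m + 2) c) = length (winv p (take m (tl c)))" using assms(2) by simp
  fix i assume "i < length (drop (m + 2) c)"
  then have i: "i < m" using assms(2) by simp
  have "m + 2 + i < length c" using assms(2) i by simp
  then have "drop (m + 2) c ! i = linv p (c ! ((length c - (m + 2 + i)) mod length c))"
    using assms(1)[unfolded inv_symmetric_def, rule_format, of "m + 2 + i"] by simp
  also have "(length c - (m + 2 + i)) mod length c = Suc (m - Suc i)"
    using assms(2) i by simp
  finally show "drop (m + 2) c ! i = winv p (take m (tl c)) ! i"
    using assms(2) i by (simp add: rev_nth nth_tl)
qed

lemma wlen_half_word:
  assumes "symmetric_rep p c" "0 < p"
  shows "normal p (half_word c)" "2 * wlen p (half_word c) \<le> wlen p c + 2 * p"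
proof -
  show "normal p (half_word c)"
    using assms normal_take by (simp add: symmetric_rep_def half_word_def)
  show "2 * wlen p (half_word c) \<le> wlen p c + 2 * p"
  proof (cases "length c \<le> 1")
    case True
    then have "wlen p c \<le> p" using wlen_le_mult_length[OF assms(2), of c] by (cases c) auto
    then show ?thesis using True by (simp add: half_word_def)
  next
    case False
    have c: "normal p c" "inv_symmetric p c" using assms False by (auto simp: symmetric_rep_def)
    have "even (length c)"
      using assms False even_length_ends_alternate[of p c] by (auto simp: symmetric_rep_def)
    then obtain j where "length c = 2 * j" by (rule evenE)
    then have "length c = 2 * (j - 1) + 2" using False by arith
    then obtain m where m: "length c = 2 * m + 2" by blast
    have half: "half_word c = hd c # take m (tl c) @ [c ! (m + 1)]"
      using m by (cases c) (auto simp: half_word_def take_Suc_conv_app_nth)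
    have "wlen p c = wlen p (take (m + 2) c) + wlen p (drop (m + 2) c)"
      by (metis append_take_drop_id wlen_append)
    also have "take (m + 2) c = half_word c" using m by (simp add: half_word_def)
    also have "wlen p (drop (m + 2) c) = wlen p (take m (tl c))"
      using inv_symmetric_drop_half[OF c(2) m] wlen_winv normal_valid_word
        normal_take[OF normal_drop[OF c(1), of 1]] by (simp add: drop_Suc)
    finally have "2 * wlen p (half_word c) = wlen p c + llen p (hd c) + llen p (c ! (m + 1))"
      using half by simp
    then show ?thesis
      using llen_le_p[OF assms(2), of "hd c"] llen_le_p[OF assms(2), of "c ! (m + 1)"] by linarith
  qed
qed

lemma hconjclass_eqI:
  assumes "normal p g1" "normal p g2" "c \<in> hconjclass p g1" "c \<in> hconjclass p g2" "0 < p"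
  shows "hconjclass p g1 = hconjclass p g2"
proof -
  have c: "conjugate p g1 c" "conjugate p g2 c" using assms by (auto simp: hconjclass_conv_conjugate)
  have "conjugate p g1 w \<longleftrightarrow> conjugate p g2 w" for w
    using conjugate_trans[OF c(1) conjugate_sym[OF c(2) assms(2,5)] assms(5)]
      conjugate_trans[OF c(2) conjugate_sym[OF c(1) assms(1,5)] assms(5)] conjugate_trans assms(5)
    by blast
  then show ?thesis using assms by (simp add: hconjclass_conv_conjugate)
qed

lemma recip_classes_hconjclass:
  assumes "0 < p" "K \<in> recip_classes p"
  obtains g where "normal p g" "K = hconjclass p g"
  using assms by (auto simp: recip_classes_def hreduced_iff_normal)

lemma recip_class_symmetric_rep:
  assumes "0 < p" "K \<in> recip_classes p"
  shows "\<exists>c \<in> K. symmetric_rep p c \<and> wlen p c = class_len p K"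
proof -
  obtain g g' where g: "normal p g" "K = hconjclass p g" and g': "g' \<in> K" "hreciprocal p g'"
    using assms by (auto simp: recip_classes_def hreduced_iff_normal)
  define c where "c = cyc_red p g"
  have len: "wlen p c = class_len p K" using class_len_hconjclass[OF g(1) assms(1)] g c_def by simp
  have c: "normal p c" "ends_alternate c" using normal_cyc_red[OF g(1) assms(1)] c_def by auto
  have cK: "conjugate p g c" using conjugate_cyc_red[OF g(1) assms(1)] c_def by simp
  show ?thesis
  proof (cases "length c \<le> 1")
    case True
    then show ?thesis using cK c len g assms by (auto simp: symmetric_rep_def hconjclass_conv_conjugate)
  next
    case False
    have "is_rotation c (winv p c)" using reciprocal_cyc_red_rotation[OF g(1) assms(1)] g g' c_def by simp
    then obtain t where t: "inv_symmetric p (rotate t c)"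
      using inv_symmetric_rotation_exists[OF c] False by auto
    have r: "normal p (rotate t c)" "ends_alternate (rotate t c)" "conjugate p c (rotate t c)"
      using rotate_conjugate[OF c assms(1)] by auto
    have "rotate t c \<in> K"
      using conjugate_trans[OF cK r(3) assms(1)] g assms by (simp add: hconjclass_conv_conjugate)
    then show ?thesis using r t len wlen_rotate[of p t c] by (auto simp: symmetric_rep_def)
  qed
qed

section \<open>Counting normal words\<close>

definition words_upto :: "nat \<Rightarrow> nat \<Rightarrow> hletter list set" where
  "words_upto p m = {w. normal p w \<and> wlen p w \<le> m}"

lemma finite_words_upto: "finite (words_upto p m)"
proof -
  have "words_upto p m \<subseteq> {xs. set xs \<subseteq> insert Iota (Gam ` {..<p}) \<and> length xs \<le> m}"
  proof
    fix w assume "w \<in> words_upto p m"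
    then have "normal p w" "wlen p w \<le> m" by (auto simp: words_upto_def)
    then have "length w \<le> m" using length_le_wlen normal_valid_word le_trans by blast
    moreover have "set w \<subseteq> insert Iota (Gam ` {..<p})"
    proof
      fix x assume "x \<in> set w"
      then have "valid_letter p x" using \<open>normal p w\<close> by (auto simp: normal_def valid_word_def)
      then show "x \<in> insert Iota (Gam ` {..<p})" by (cases x) auto
    qed
    ultimately show "w \<in> {xs. set xs \<subseteq> insert Iota (Gam ` {..<p}) \<and> length xs \<le> m}"
      by simp
  qed
  then show ?thesis using finite_lists_length_le[of "insert Iota (Gam ` {..<p})" m] finite_subset by blast
qed

lemma words_upto_mono: "m \<le> m' \<Longrightarrow> words_upto p m \<subseteq> words_upto p m'"
  by (auto simp: words_upto_def)

lemma card_words_upto_mono: "m \<le> m' \<Longrightarrow> card (words_upto p m) \<le> card (words_upto p m')"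
  by (rule card_mono[OF finite_words_upto words_upto_mono])

lemma Nil_words_upto: "[] \<in> words_upto p m" by (simp add: words_upto_def)

lemma card_words_upto_pos: "1 \<le> card (words_upto p m)"
  using finite_words_upto Nil_words_upto by (metis One_nat_def Suc_leI card_gt_0_iff empty_iff)

lemma card_le_mult_card_image:
  assumes "finite A" "\<And>a. a \<in> A \<Longrightarrow> card {b \<in> A. f b = f a} \<le> k"
  shows "card A \<le> k * card (f ` A)"
proof -
  have A: "A = (\<Union>y\<in>f ` A. {a \<in> A. f a = y})" by auto
  have "card A = (\<Sum>y\<in>f ` A. card {a \<in> A. f a = y})"
    by (subst A, rule card_UN_disjoint) (use assms in auto)
  also have "\<dots> \<le> (\<Sum>y\<in>f ` A. k)"
    by (rule sum_mono) (use assms in auto)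
  finally show ?thesis by (simp add: mult.commute)
qed

definition words_of_len :: "nat \<Rightarrow> nat \<Rightarrow> hletter list set" where
  "words_of_len p a = {w. normal p w \<and> wlen p w = a}"

lemma finite_words_of_len: "finite (words_of_len p a)"
  by (rule finite_subset[OF _ finite_words_upto[of p a]]) (auto simp: words_of_len_def words_upto_def)

definition gam_ended :: "nat \<Rightarrow> nat \<Rightarrow> hletter list set" where
  "gam_ended p m = {u. normal p u \<and> u \<noteq> [] \<and> hd u \<noteq> Iota \<and> last u \<noteq> Iota \<and> wlen p u \<le> m}"

lemma finite_gam_ended: "finite (gam_ended p m)"
  by (rule finite_subset[OF _ finite_words_upto[of p m]]) (auto simp: gam_ended_def words_upto_def)

definition gam_prefix :: "hletter list \<Rightarrow> hletter list" where
  "gam_prefix u = (if u = [] \<or> hd u = Iota then [Gam 1] else [])"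

definition gam_suffix :: "hletter list \<Rightarrow> hletter list" where
  "gam_suffix u = (if u \<noteq> [] \<and> last u = Iota then [Gam 1] else [])"

lemma padded_in_gam_ended:
  assumes "3 \<le> p" "u \<in> words_upto p m"
  shows "gam_prefix u @ u @ gam_suffix u \<in> gam_ended p (m + 2)"
proof -
  have u: "normal p u" "wlen p u \<le> m" using assms by (auto simp: words_upto_def)
  have v1: "valid_letter p (Gam 1)" using assms by simp
  have n: "normal p (gam_prefix u @ u @ gam_suffix u)"
    using u v1 by (cases "u = []"; cases "hd u"; cases "last u") (auto simp: gam_prefix_def gam_suffix_def normal_append normal_Cons)
  have ne: "gam_prefix u @ u @ gam_suffix u \<noteq> []" by (auto simp: gam_prefix_def)
  have h: "hd (gam_prefix u @ u @ gam_suffix u) \<noteq> Iota" by (auto simp: gam_prefix_def gam_suffix_def)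
  have l: "last (gam_prefix u @ u @ gam_suffix u) \<noteq> Iota" by (auto simp: gam_prefix_def gam_suffix_def)
  have "wlen p (gam_prefix u) \<le> 1" "wlen p (gam_suffix u) \<le> 1"
    using assms by (auto simp: gam_prefix_def gam_suffix_def)
  then have "wlen p (gam_prefix u @ u @ gam_suffix u) \<le> m + 2" using u by simp
  then show ?thesis using n ne h l by (simp add: gam_ended_def)
qed

lemma card_words_upto_le_gam_ended:
  assumes "3 \<le> p"
  shows "card (words_upto p m) \<le> 4 * card (gam_ended p (m + 2))"
proof -
  define enc where "enc u = (gam_prefix u @ u @ gam_suffix u, (gam_prefix u \<noteq> [], gam_suffix u \<noteq> []))" for u
  define dec where "dec = (\<lambda>(v :: hletter list, b1 :: bool, b2 :: bool).
     let v1 = (if b1 then tl v else v) in if b2 then butlast v1 else v1)"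
  have "dec (enc u) = u" for u
    unfolding dec_def enc_def by (auto simp: gam_prefix_def gam_suffix_def Let_def)
  then have inj: "inj_on enc (words_upto p m)" by (metis inj_onI)
  have img: "enc ` words_upto p m \<subseteq> gam_ended p (m + 2) \<times> ((UNIV :: bool set) \<times> (UNIV :: bool set))"
    using padded_in_gam_ended[OF assms] enc_def by auto
  have "card (words_upto p m) \<le> card (gam_ended p (m + 2) \<times> ((UNIV :: bool set) \<times> (UNIV :: bool set)))"
    using card_inj_on_le[OF inj img] finite_gam_ended by (simp del: UNIV_Times_UNIV)
  also have "\<dots> = card (gam_ended p (m + 2)) * 4"
    by (simp only: card_cartesian_product card_UNIV_bool)
  finally show ?thesis by simp
qed

fun alt_iota :: "nat \<Rightarrow> hletter list" and alt_gam :: "nat \<Rightarrow> hletter list" where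
  "alt_iota 0 = []"
| "alt_iota (Suc n) = Iota # alt_gam n"
| "alt_gam 0 = []"
| "alt_gam (Suc n) = Gam 1 # alt_iota n"

lemma alt_iota_alt_gam_props:
  "2 \<le> p \<Longrightarrow> (normal p (alt_iota n) \<and> wlen p (alt_iota n) = n \<and> set (alt_iota n) \<subseteq> {Iota, Gam 1} \<and> (0 < n \<longrightarrow> hd (alt_iota n) = Iota))
   \<and> (normal p (alt_gam n) \<and> wlen p (alt_gam n) = n \<and> set (alt_gam n) \<subseteq> {Iota, Gam 1} \<and> (0 < n \<longrightarrow> hd (alt_gam n) = Gam 1))"
proof (induction n)
  case (Suc n)
  then show ?case by (cases n) (auto simp: normal_Cons)
qed simp

lemma normal_alt_iota: "2 \<le> p \<Longrightarrow> normal p (alt_iota n)" using alt_iota_alt_gam_props by blast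

lemma wlen_alt_iota: "2 \<le> p \<Longrightarrow> wlen p (alt_iota n) = n" using alt_iota_alt_gam_props by blast

lemma set_alt_iota: "2 \<le> p \<Longrightarrow> set (alt_iota n) \<subseteq> {Iota, Gam 1}"
  using alt_iota_alt_gam_props by blast

lemma hd_alt_iota: "2 \<le> p \<Longrightarrow> 0 < n \<Longrightarrow> hd (alt_iota n) = Iota"
  using alt_iota_alt_gam_props by blast

definition iota_pad :: "hletter list \<Rightarrow> hletter list" where
  "iota_pad u = (if u \<noteq> [] \<and> last u \<noteq> Iota then [Iota] else [])"

definition strip_alt_tail :: "hletter list \<Rightarrow> hletter list" where
  "strip_alt_tail w = rev (dropWhile (\<lambda>x. x = Iota \<or> x = Gam 1) (rev w))"

lemma strip_alt_tail_append:
  "set ys \<subseteq> {Iota, Gam 1} \<Longrightarrow> strip_alt_tail (P @ Gam 2 # ys) = P @ [Gam 2]"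
proof -
  assume a: "set ys \<subseteq> {Iota, Gam 1}"
  have "\<And>x. x \<in> set (rev ys) \<Longrightarrow> x = Iota \<or> x = Gam 1" using a by auto
  then have "dropWhile (\<lambda>x. x = Iota \<or> x = Gam 1) (rev ys @ Gam 2 # rev P) = Gam 2 # rev P"
    by (simp only: dropWhile_append2) simp
  then show ?thesis unfolding strip_alt_tail_def by simp
qed

text \<open>A word u of length at most m is padded to length exactly T as u (iota) gamma^2 v, with v
  alternating in iota and gamma; since p \<ge> 3, the last gamma^2 marks the end of u (iota), and
  one bit records whether the iota was inserted.\<close>

lemma card_words_upto_le_words_of_len:
  assumes "3 \<le> p" "m + 3 \<le> T"
  shows "card (words_upto p m) \<le> 2 * card (words_of_len p T)"
proof -
  define L where "L u = T - (wlen p u + wlen p (iota_pad u) + llen p (Gam 2))" for u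
  define enc where "enc u = (u @ iota_pad u @ Gam 2 # alt_iota (L u), iota_pad u \<noteq> [])" for u
  define dec where "dec = (\<lambda>(w, b). if b then butlast (butlast (strip_alt_tail w)) else butlast (strip_alt_tail w))"
  have "dec (enc u) = u" for u
  proof -
    have "strip_alt_tail (u @ iota_pad u @ Gam 2 # alt_iota (L u)) = (u @ iota_pad u) @ [Gam 2]"
      using strip_alt_tail_append[of "alt_iota (L u)" "u @ iota_pad u"] set_alt_iota[of p "L u"] assms by simp
    then show ?thesis unfolding dec_def enc_def by (auto simp: iota_pad_def butlast_append)
  qed
  then have inj: "inj_on enc (words_upto p m)" by (metis inj_onI)
  have img: "enc ` words_upto p m \<subseteq> words_of_len p T \<times> UNIV"
  proof
    fix z assume "z \<in> enc ` words_upto p m"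
    then obtain u where u: "u \<in> words_upto p m" "z = enc u" by blast
    have un: "normal p u" "wlen p u \<le> m" using u by (auto simp: words_upto_def)
    have g: "wlen p (iota_pad u) \<le> 1" by (simp add: iota_pad_def)
    have w: "wlen p (u @ iota_pad u @ Gam 2 # alt_iota (L u)) = T"
      using un g assms wlen_alt_iota[of p "L u"] unfolding L_def by simp
    have n1: "normal p (u @ iota_pad u)" using un by (auto simp: iota_pad_def normal_append normal_Cons)
    have l1: "u @ iota_pad u = [] \<or> last (u @ iota_pad u) = Iota" by (auto simp: iota_pad_def)
    have n2: "normal p (Gam 2 # alt_iota (L u))" using normal_alt_iota[of p "L u"] assms hd_alt_iota[of p "L u"]
      by (cases "L u") (auto simp: normal_Cons)
    have "normal p ((u @ iota_pad u) @ Gam 2 # alt_iota (L u))" using n1 n2 l1 by (auto simp: normal_append)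
    then show "z \<in> words_of_len p T \<times> UNIV" using u w by (simp add: enc_def words_of_len_def)
  qed
  have "card (words_upto p m) \<le> card (words_of_len p T \<times> (UNIV :: bool set))"
    using card_inj_on_le[OF inj img] finite_words_of_len by simp
  also have "\<dots> = card (words_of_len p T) * 2" by (simp add: card_cartesian_product card_UNIV_bool)
  finally show ?thesis by simp
qed

lemma append_eq_wlen_eq:
  assumes "xs @ ys = xs' @ ys'" "wlen p xs = wlen p xs'" "valid_word p xs" "valid_word p xs'"
  shows "xs = xs'"
proof -
  obtain us where "(xs = xs' @ us \<and> us @ ys = ys') \<or> (xs @ us = xs' \<and> ys = us @ ys')"
    using assms(1) append_eq_append_conv2 by blast
  then show ?thesis
  proof
    assume a: "xs = xs' @ us \<and> us @ ys = ys'"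
    then have "wlen p us = 0" "valid_word p us" using assms by auto
    then have "us = []" using length_le_wlen[of p us] by simp
    then show ?thesis using a by simp
  next
    assume a: "xs @ us = xs' \<and> ys = us @ ys'"
    then have "wlen p us = 0" "valid_word p us" using assms by auto
    then have "us = []" using length_le_wlen[of p us] by simp
    then show ?thesis using a by simp
  qed
qed

definition join_letter :: "hletter list \<Rightarrow> hletter list \<Rightarrow> hletter list" where
  "join_letter w1 w2 = (if w1 \<noteq> [] \<and> w2 \<noteq> [] \<and> same_factor (last w1) (hd w2)
     then [if last w1 = Iota then Gam 1 else Iota] else [])"

lemma card_words_of_len_mult_le:
  assumes "3 \<le> p"
  shows "card (words_of_len p a) * card (words_of_len p b) \<le> 2 * card (words_upto p (a + b + 1))"
proof -
  define enc where "enc = (\<lambda>(w1, w2). (w1 @ join_letter w1 w2 @ w2, join_letter w1 w2 \<noteq> []))"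
  have inj: "inj_on enc (words_of_len p a \<times> words_of_len p b)"
  proof (rule inj_onI)
    fix z1 z2 assume z: "z1 \<in> words_of_len p a \<times> words_of_len p b" "z2 \<in> words_of_len p a \<times> words_of_len p b" "enc z1 = enc z2"
    obtain w1 w2 where zz1: "z1 = (w1, w2)" by (cases z1)
    obtain v1 v2 where zz2: "z2 = (v1, v2)" by (cases z2)
    have n: "normal p w1" "normal p v1" "wlen p w1 = a" "wlen p v1 = a"
      using z zz1 zz2 by (auto simp: words_of_len_def)
    have e: "w1 @ (join_letter w1 w2 @ w2) = v1 @ (join_letter v1 v2 @ v2)" "(join_letter w1 w2 \<noteq> []) = (join_letter v1 v2 \<noteq> [])"
      using z(3) zz1 zz2 by (auto simp: enc_def)
    have w1: "w1 = v1"
      using append_eq_wlen_eq[OF e(1), of p] n normal_valid_word[of p w1] normal_valid_word[of p v1] by simp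
    have "join_letter w1 w2 = join_letter v1 v2"
      using e(2) w1 by (auto simp: join_letter_def split: if_splits)
    then have "w2 = v2" using e(1) w1 by simp
    then show "z1 = z2" using w1 zz1 zz2 by simp
  qed
  have img: "enc ` (words_of_len p a \<times> words_of_len p b) \<subseteq> words_upto p (a + b + 1) \<times> UNIV"
  proof
    fix z assume "z \<in> enc ` (words_of_len p a \<times> words_of_len p b)"
    then obtain w1 w2 where w: "w1 \<in> words_of_len p a" "w2 \<in> words_of_len p b" "z = enc (w1, w2)"
      by blast
    have n: "normal p w1" "normal p w2" "wlen p w1 = a" "wlen p w2 = b"
      using w by (auto simp: words_of_len_def)
    have v: "valid_letter p (Gam 1)" using assms by simp
    have "normal p (w1 @ join_letter w1 w2 @ w2)"
    proof (cases "w1 \<noteq> [] \<and> w2 \<noteq> [] \<and> same_factor (last w1) (hd w2)")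
      case True
      then show ?thesis using n v
        by (cases "last w1"; cases "hd w2") (auto simp: join_letter_def normal_append normal_Cons)
    next
      case False
      then show ?thesis using n by (auto simp: join_letter_def normal_append)
    qed
    moreover have "wlen p (join_letter w1 w2) \<le> 1" using assms by (auto simp: join_letter_def)
    ultimately show "z \<in> words_upto p (a + b + 1) \<times> UNIV"
      using w n by (auto simp: enc_def words_upto_def)
  qed
  have "card (words_of_len p a \<times> words_of_len p b) \<le> card (words_upto p (a + b + 1) \<times> (UNIV :: bool set))"
    using card_inj_on_le[OF inj img] finite_words_upto by simp
  then show ?thesis by (simp add: card_cartesian_product card_UNIV_bool)
qed

lemma split_by_wlen:
  "valid_word p w \<Longrightarrow> wlen p w \<le> m + D \<Longrightarrow> 0 < p \<Longrightarrow> \<exists>k. wlen p (take k w) \<le> m \<and> wlen p (drop k w) \<le> D + p"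
proof (induction w arbitrary: m)
  case Nil then show ?case by simp
next
  case (Cons x w)
  show ?case
  proof (cases "llen p x \<le> m")
    case False
    then have "wlen p (x # w) \<le> D + p" using Cons.prems llen_le_p[of p x] by simp
    then show ?thesis by (intro exI[of _ 0]) simp
  next
    case True
    have "valid_word p w" "wlen p w \<le> (m - llen p x) + D"
      using Cons.prems True by (auto simp: valid_word_def)
    then obtain k where "wlen p (take k w) \<le> m - llen p x" "wlen p (drop k w) \<le> D + p"
      using Cons.IH Cons.prems by blast
    then show ?thesis using True by (intro exI[of _ "Suc k"]) simp
  qed
qed

lemma card_words_upto_add_le:
  assumes "0 < p"
  shows "card (words_upto p (m + D)) \<le> card (words_upto p m) * card (words_upto p (D + p))"
proof -
  have "words_upto p (m + D) \<subseteq> (\<lambda>(x, y). x @ y) ` (words_upto p m \<times> words_upto p (D + p))"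
  proof
    fix w assume w: "w \<in> words_upto p (m + D)"
    then have "valid_word p w" "wlen p w \<le> m + D" "normal p w"
      by (auto simp: words_upto_def normal_valid_word)
    then obtain k where k: "wlen p (take k w) \<le> m" "wlen p (drop k w) \<le> D + p"
      using split_by_wlen assms by blast
    have "take k w \<in> words_upto p m" "drop k w \<in> words_upto p (D + p)"
      using k \<open>normal p w\<close> normal_take normal_drop by (auto simp: words_upto_def)
    then show "w \<in> (\<lambda>(x, y). x @ y) ` (words_upto p m \<times> words_upto p (D + p))"
      by (intro image_eqI[of _ _ "(take k w, drop k w)"]) auto
  qed
  then have "card (words_upto p (m + D)) \<le> card ((\<lambda>(x, y). x @ y) ` (words_upto p m \<times> words_upto p (D + p)))"
    by (intro card_mono finite_imageI finite_cartesian_product finite_words_upto)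
  also have "\<dots> \<le> card (words_upto p m \<times> words_upto p (D + p))"
    by (intro card_image_le finite_cartesian_product finite_words_upto)
  finally show ?thesis by (simp add: card_cartesian_product)
qed

lemma card_words_upto_sq_le:
  assumes "3 \<le> p"
  shows "card (words_upto p t) ^ 2 \<le> 8 * card (words_upto p (2 * t + 7))"
proof -
  have "card (words_upto p t) \<le> 2 * card (words_of_len p (t + 3))"
    using card_words_upto_le_words_of_len[OF assms] by simp
  then have "card (words_upto p t) ^ 2 \<le> (2 * card (words_of_len p (t + 3))) ^ 2"
    by (rule power_mono) simp
  also have "\<dots> = 4 * (card (words_of_len p (t + 3)) * card (words_of_len p (t + 3)))"
    by (simp add: power2_eq_square)
  also have "\<dots> \<le> 4 * (2 * card (words_upto p (t + 3 + (t + 3) + 1)))"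
    using card_words_of_len_mult_le[OF assms] by (rule mult_le_mono2)
  also have "t + 3 + (t + 3) + 1 = 2 * t + 7"
    by simp
  finally show ?thesis by linarith
qed

section \<open>Upper bound\<close>

text \<open>Keeping the first half of a symmetric representative of each class is injective.\<close>

lemma card_W_le_words_upto:
  assumes "0 < p"
  shows "finite (W p y)" "card (W p y) \<le> card (words_upto p (nat \<lfloor>y\<rfloor> div 2 + p))"
proof -
  define rep where "rep K = (SOME c. c \<in> K \<and> symmetric_rep p c \<and> wlen p c = class_len p K)" for K
  have rep: "rep K \<in> K" "symmetric_rep p (rep K)" "real (wlen p (rep K)) \<le> y" if "K \<in> W p y" for K
  proof -
    have "\<exists>c. c \<in> K \<and> symmetric_rep p c \<and> wlen p c = class_len p K"
      using recip_class_symmetric_rep[OF assms, of K] that unfolding W_def by blast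
    then have "rep K \<in> K \<and> symmetric_rep p (rep K) \<and> wlen p (rep K) = class_len p K"
      unfolding rep_def by (rule someI_ex)
    then show "rep K \<in> K" "symmetric_rep p (rep K)" "real (wlen p (rep K)) \<le> y"
      using that by (auto simp: W_def)
  qed
  have img: "(half_word \<circ> rep) ` W p y \<subseteq> words_upto p (nat \<lfloor>y\<rfloor> div 2 + p)"
  proof clarify
    fix K assume K: "K \<in> W p y"
    have "wlen p (rep K) \<le> nat \<lfloor>y\<rfloor>" using rep(3)[OF K] by linarith
    then show "(half_word \<circ> rep) K \<in> words_upto p (nat \<lfloor>y\<rfloor> div 2 + p)"
      using wlen_half_word[OF rep(2)[OF K] assms] by (auto simp: words_upto_def)
  qed
  have "inj_on (half_word \<circ> rep) (W p y)"
  proof (rule inj_onI)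
    fix K1 K2 assume K: "K1 \<in> W p y" "K2 \<in> W p y" "(half_word \<circ> rep) K1 = (half_word \<circ> rep) K2"
    then have "rep K1 = rep K2" using half_word_inj rep(2) by auto
    moreover obtain g1 g2 where "normal p g1" "K1 = hconjclass p g1" "normal p g2" "K2 = hconjclass p g2"
      using K(1,2) recip_classes_hconjclass[OF assms]
        unfolding W_def by (metis (no_types, lifting) mem_Collect_eq)
    ultimately show "K1 = K2" using hconjclass_eqI[of p g1 g2 "rep K1"] rep(1)[OF K(1)] rep(1)[OF K(2)] assms
      by simp
  qed
  then show "finite (W p y)" "card (W p y) \<le> card (words_upto p (nat \<lfloor>y\<rfloor> div 2 + p))"
    using inj_on_finite[OF _ img] card_inj_on_le[OF _ img] finite_words_upto by auto
qed

section \<open>Lower bound\<close>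

text \<open>For u beginning and ending with a power of gamma, the word iota u iota u^-1 is
  cyclically reduced, and rotate1 maps it to its inverse, so its class is reciprocal.\<close>

definition recip_word :: "nat \<Rightarrow> hletter list \<Rightarrow> hletter list" where
  "recip_word p u = Iota # u @ Iota # winv p u"

lemma recip_word_props:
  assumes "normal p u" "u \<noteq> []" "hd u \<noteq> Iota" "last u \<noteq> Iota" "0 < p"
  shows "normal p (recip_word p u)" "ends_alternate (recip_word p u)" "winv p (recip_word p u) = rotate1 (recip_word p u)"
    "wlen p (recip_word p u) = 2 * wlen p u + 2"
proof -
  have vu: "valid_word p u" using assms normal_valid_word by blast
  have niv: "normal p (winv p u)" using normal_winv assms by blast
  have hiv: "hd (winv p u) \<noteq> Iota" "last (winv p u) \<noteq> Iota" "winv p u \<noteq> []"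
    using assms by (auto simp: hd_rev last_rev hd_map last_map linv_Iota_iff)
  show "normal p (recip_word p u)" unfolding recip_word_def using assms niv hiv
    by (auto simp: normal_Cons normal_append)
  show "ends_alternate (recip_word p u)" unfolding recip_word_def ends_alternate_def
    using hiv by (cases "winv p u" rule: rev_cases) auto
  show "winv p (recip_word p u) = rotate1 (recip_word p u)" unfolding recip_word_def
    using winv_winv[OF vu] by simp
  show "wlen p (recip_word p u) = 2 * wlen p u + 2" unfolding recip_word_def using wlen_winv[OF vu] by simp
qed

lemma recip_word_inj: "recip_word p u = recip_word p v \<Longrightarrow> u = v"
proof -
  assume e: "recip_word p u = recip_word p v"
  have "length (recip_word p u) = 2 * length u + 2" "length (recip_word p v) = 2 * length v + 2"
    by (simp_all add: recip_word_def)
  then have "length u = length v" using e by simp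
  moreover have "take (length u) (tl (recip_word p u)) = u" "take (length v) (tl (recip_word p v)) = v"
    by (simp_all add: recip_word_def)
  ultimately show "u = v" using e by metis
qed

lemma hconjclass_recip_word_in_W:
  assumes "0 < p" "u \<in> gam_ended p m" "real (2 * m + 2) \<le> x"
  shows "hconjclass p (recip_word p u) \<in> W p x"
proof -
  have u: "normal p u" "u \<noteq> []" "hd u \<noteq> Iota" "last u \<noteq> Iota" "wlen p u \<le> m"
    using assms by (auto simp: gam_ended_def)
  note r = recip_word_props[OF u(1-4) assms(1)]
  have "conjugate p (recip_word p u) (rotate1 (recip_word p u))"
    using rotate1_conjugate[OF r(1,2) assms(1)] by blast
  then have "hreciprocal p (recip_word p u)"
    using r assms by (simp add: hreciprocal_def recip_word_def hreduced_iff_normal hinv_normal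
        hconj_iff_conjugate)
  moreover have "recip_word p u \<in> hconjclass p (recip_word p u)"
    using conjugate_refl r assms by (simp add: hconjclass_conv_conjugate)
  moreover have "class_len p (hconjclass p (recip_word p u)) = wlen p (recip_word p u)"
    using class_len_hconjclass[OF r(1) assms(1)] cyc_red_ends_alternate[OF r(2)] by simp
  ultimately show ?thesis
    using r u assms by (auto simp: W_def recip_classes_def hreduced_iff_normal)
qed

text \<open>Two words iota u iota u^-1 in the same class differ by a rotation s with 2 s a period,
  and there are at most two such rotations.\<close>

lemma card_recip_word_fiber:
  assumes "0 < p" "u \<in> gam_ended p m"
  shows "card {v \<in> gam_ended p m. hconjclass p (recip_word p v) = hconjclass p (recip_word p u)} \<le> 2"
    (is "card ?F \<le> 2")
proof -
  have u: "normal p u" "u \<noteq> []" "hd u \<noteq> Iota" "last u \<noteq> Iota"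
    using assms by (auto simp: gam_ended_def)
  note ru = recip_word_props[OF u assms(1)]
  have ne: "recip_word p u \<noteq> []" by (simp add: recip_word_def)
  obtain a b where ab: "\<And>s. rotate (2 * s) (recip_word p u) = recip_word p u \<Longrightarrow>
      rotate s (recip_word p u) \<in> {a, b}"
    using rotate_double_fixed_two_values[OF ne] by blast
  have "recip_word p v \<in> {a, b}" if v: "v \<in> ?F" for v
  proof -
    have v': "normal p v" "v \<noteq> []" "hd v \<noteq> Iota" "last v \<noteq> Iota"
      using v by (auto simp: gam_ended_def)
    note rv = recip_word_props[OF v' assms(1)]
    have "recip_word p v \<in> hconjclass p (recip_word p u)"
      using v conjugate_refl rv assms by (auto simp: hconjclass_conv_conjugate)
    moreover have "cyc_reduced p (recip_word p v)" using rv assms by (simp add: cyc_reduced_iff_normal)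
    ultimately have "is_rotation (recip_word p u) (recip_word p v)"
      using hconjclass_cyc_reduced_is_rotation[OF ru(1) assms(1)] cyc_red_ends_alternate[OF ru(2)] by metis
    then obtain s where s: "recip_word p v = rotate s (recip_word p u)" by (auto simp: is_rotation_def)
    then have "rotate (2 * s) (recip_word p u) = recip_word p u"
      using rotate_double_eq_if_winv_rotate1[OF ru(3) _ ne] rv(3) by simp
    then show ?thesis using ab s by simp
  qed
  then have "recip_word p ` ?F \<subseteq> {a, b}" by blast
  moreover have "inj_on (recip_word p) ?F" by (meson recip_word_inj inj_onI)
  ultimately have "card ?F \<le> card {a, b}" using card_inj_on_le by blast
  also have "\<dots> \<le> 2" by (simp add: card_insert_if)
  finally show ?thesis .
qed

lemma card_gam_ended_le_W:
  assumes "0 < p" "real (2 * m + 2) \<le> x"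
  shows "card (gam_ended p m) \<le> 2 * card (W p x)"
proof -
  let ?f = "\<lambda>u. hconjclass p (recip_word p u)"
  have "card (gam_ended p m) \<le> 2 * card (?f ` gam_ended p m)"
    using card_le_mult_card_image[OF finite_gam_ended card_recip_word_fiber[OF assms(1)]] by simp
  also have "card (?f ` gam_ended p m) \<le> card (W p x)"
    using hconjclass_recip_word_in_W[OF assms(1) _ assms(2)]
    by (intro card_mono card_W_le_words_upto(1)[OF assms(1)]) auto
  finally show ?thesis by simp
qed

lemma card_words_upto_le_W:
  assumes "3 \<le> p" "real (2 * m + 6) \<le> x"
  shows "card (words_upto p m) \<le> 8 * card (W p x)"
proof -
  have "card (words_upto p m) \<le> 4 * card (gam_ended p (m + 2))"
    by (rule card_words_upto_le_gam_ended[OF assms(1)])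
  also have "\<dots> \<le> 8 * card (W p x)"
    using card_gam_ended_le_W[of p "m + 2" x] assms by simp
  finally show ?thesis .
qed

lemma card_W_half_sq_le:
  assumes "3 \<le> p" "20 \<le> x"
  shows "card (W p (of_int \<lfloor>x / 2\<rfloor>)) ^ 2 \<le> 64 * card (words_upto p (3 * p + 10)) * card (W p x)"
proof -
  define a where "a = nat \<lfloor>x / 2\<rfloor>"
  define K where "K = card (words_upto p (3 * p + 10))"
  have p: "0 < p" using assms by simp
  have a: "real (2 * a) \<le> x" using assms unfolding a_def by linarith
  have "card (W p (of_int \<lfloor>x / 2\<rfloor>)) \<le> card (words_upto p (a div 2 + p))"
    using card_W_le_words_upto(2)[OF p, of "of_int \<lfloor>x / 2\<rfloor>"] unfolding a_def by simp
  then have "card (W p (of_int \<lfloor>x / 2\<rfloor>)) ^ 2 \<le> card (words_upto p (a div 2 + p)) ^ 2"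
    by (rule power_mono) simp
  also have "\<dots> \<le> 8 * card (words_upto p (2 * (a div 2 + p) + 7))"
    by (rule card_words_upto_sq_le[OF assms(1)])
  \<comment> \<open>m = a - 3 satisfies both 2 m + 6 \<le> x and 2 (a div 2 + p) + 7 \<le> m + (2 p + 10)\<close>
  also have "\<dots> \<le> 8 * card (words_upto p ((a - 3) + (2 * p + 10)))"
    using div_times_less_eq_dividend[of a 2] by (intro mult_le_mono2 card_words_upto_mono) arith
  also have "\<dots> \<le> 8 * (card (words_upto p (a - 3)) * K)"
    using card_words_upto_add_le[OF p, of "a - 3" "2 * p + 10"] unfolding K_def
    by (simp add: add.commute add.left_commute)
  also have "\<dots> \<le> 8 * (8 * card (W p x) * K)"
    using card_words_upto_le_W[OF assms(1), of "a - 3" x] a assms(2) by simp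
  finally show ?thesis unfolding K_def by (simp add: mult_ac)
qed

theorem lemma3p6:
  fixes p :: nat
  assumes "p \<ge> 3"
  shows "\<exists>C::real. C > 0 \<and> (\<exists>x0::real. \<forall>x\<ge>x0.
           2 * (real (card (W p (real_of_int \<lfloor>x / 2\<rfloor>))))^2 \<le> C^2 * real (card (W p x)))"
proof (intro exI conjI allI impI)
  define K where "K = card (words_upto p (3 * p + 10))"
  have "0 < K" using card_words_upto_pos unfolding K_def by (simp add: Suc_le_eq)
  then show "0 < sqrt (128 * real K)" by simp
  fix x :: real assume "20 \<le> x"
  then have "real (card (W p (of_int \<lfloor>x / 2\<rfloor>)) ^ 2) \<le> real (64 * K * card (W p x))"
    using card_W_half_sq_le[OF assms] unfolding K_def of_nat_le_iff by blast
  then show "2 * (real (card (W p (of_int \<lfloor>x / 2\<rfloor>))))^2 \<le> (sqrt (128 * real K))^2 * real (card (W p x))"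
    by simp
qed

end
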